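(* For every integer $n\ge1$, the complete graph $K_{2n}$ is map-rich.
   Context: A map is a triple $M=(C_M,v_M,f_M)$ where $C_M$ is a finite cubic graph (multiple edges allowed) and $v_M,f_M$ are disjoint perfect matchings whose union is a disjoint union of 4-cycles, the squares ($SQ(M)$). $a_M=E(C_M)\setminus(v_M\cup f_M)$; $z_M$ is the matching of square diagonals; $Q_M=C_M\cup z_M$. For a map $X$, $G_X$ has vertices the cycles of $v_X\cup a_X$ and edges the squares, each square joining the cycles containing its two $v_X$-edges. The dual is $D=(C_M,f_M,v_M)$, the phial $P=(Q_M\setminus v_M,z_M,f_M)$; edge sets of $G_M,G_D,G_P$ are identified with $SQ(M)$, and $V,F,Z$ denote their $GF(2)$-coboundary spaces, $V^\perp$ the cycle space of $G_M$. $M$ is rich if $V^\perp=F+Z$. A graph $G$ is map-rich if $G\cong G_M$ for some rich map $M$. *)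

theory Defs
  imports Main
begin

text \<open>A cubic multigraph (multiple edges allowed, no loops) with vertex set nodes, edge set
  edges, and endpoint function ends (each edge has a 2-element set of ends), together with
  the two distinguished edge sets vm (= v_M) and fm (= f_M).\<close>

record ('v, 'e) cmap =
  nodes :: "'v set"
  edges :: "'e set"
  ends  :: "'e \<Rightarrow> 'v set"
  vm    :: "'e set"
  fm    :: "'e set"

definition adj_rel :: "('e \<Rightarrow> 'v set) \<Rightarrow> 'e set \<Rightarrow> ('v \<times> 'v) set" where
  "adj_rel en S = {(x, y). \<exists>e\<in>S. en e = {x, y}}"

definition comp :: "('e \<Rightarrow> 'v set) \<Rightarrow> 'e set \<Rightarrow> 'v \<Rightarrow> 'v set" where
  "comp en S x = {y. (x, y) \<in> (adj_rel en S)\<^sup>*}"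

definition perfect_matching :: "('v, 'e) cmap \<Rightarrow> 'e set \<Rightarrow> bool" where
  "perfect_matching M S \<longleftrightarrow> S \<subseteq> edges M \<and>
     (\<forall>x\<in>nodes M. \<exists>!e. e \<in> S \<and> x \<in> ends M e)"

definition cubic_graph :: "('v, 'e) cmap \<Rightarrow> bool" where
  "cubic_graph M \<longleftrightarrow> finite (nodes M) \<and> finite (edges M) \<and>
     (\<forall>e\<in>edges M. ends M e \<subseteq> nodes M \<and> card (ends M e) = 2) \<and>
     (\<forall>x\<in>nodes M. card {e\<in>edges M. x \<in> ends M e} = 3)"

text \<open>M is a map: v and f disjoint perfect matchings whose union is a disjoint union of
  4-cycles (the union of two disjoint perfect matchings is 2-regular, so this amounts to every
  component of the spanning subgraph v \<union> f having exactly 4 vertices).\<close>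

definition is_map :: "('v, 'e) cmap \<Rightarrow> bool" where
  "is_map M \<longleftrightarrow> cubic_graph M \<and> perfect_matching M (vm M) \<and> perfect_matching M (fm M) \<and>
     vm M \<inter> fm M = {} \<and>
     (\<forall>x\<in>nodes M. card (comp (ends M) (vm M \<union> fm M) x) = 4)"

definition am :: "('v, 'e) cmap \<Rightarrow> 'e set" where
  "am M = edges M - (vm M \<union> fm M)"

definition squares :: "('v, 'e) cmap \<Rightarrow> 'v set set" where
  "squares M = (\<lambda>x. comp (ends M) (vm M \<union> fm M) x) ` nodes M"

text \<open>The diagonals z_M of the squares: pairs of distinct vertices in the same square that are
  not joined by an edge of v \<union> f (i.e. opposite vertices of the 4-cycle).\<close>

definition zdiag :: "('v, 'e) cmap \<Rightarrow> 'v set set" where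
  "zdiag M = {d. \<exists>x\<in>nodes M. \<exists>y. d = {x, y} \<and> y \<noteq> x \<and>
                 y \<in> comp (ends M) (vm M \<union> fm M) x \<and>
                 \<not> (\<exists>e\<in>vm M \<union> fm M. ends M e = {x, y})}"

text \<open>Q_M = C_M \<union> z_M: old edges tagged Inl, diagonals tagged Inr (a diagonal is its own
  set of ends).\<close>

definition qends :: "('v, 'e) cmap \<Rightarrow> 'e + 'v set \<Rightarrow> 'v set" where
  "qends M q = (case q of Inl e \<Rightarrow> ends M e | Inr d \<Rightarrow> d)"

definition dual :: "('v, 'e) cmap \<Rightarrow> ('v, 'e) cmap" where
  "dual M = \<lparr>nodes = nodes M, edges = edges M, ends = ends M, vm = fm M, fm = vm M\<rparr>"

definition phial :: "('v, 'e) cmap \<Rightarrow> ('v, 'e + 'v set) cmap" where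
  "phial M = \<lparr>nodes = nodes M,
              edges = Inl ` (edges M - vm M) \<union> Inr ` zdiag M,
              ends = qends M,
              vm = Inr ` zdiag M,
              fm = Inl ` fm M\<rparr>"

text \<open>A multigraph (loops allowed) given by vertices, edges and an incidence count: ginc e x is
  the number of ends of e at x (2 for a loop).\<close>

record ('a, 'b) mgraph =
  gverts :: "'a set"
  gedges :: "'b set"
  ginc   :: "'b \<Rightarrow> 'a \<Rightarrow> nat"

text \<open>G_X: vertices are (vertex sets of) the cycles of v_X \<union> a_X; edges are the squares of X
  (as vertex sets, which identifies the edge sets of G_M, G_D, G_P with SQ(M)); a square s
  is incident to a cycle K once for each v_X-edge of s lying in K.\<close>

definition Gof :: "('v, 'e) cmap \<Rightarrow> ('v set, 'v set) mgraph" where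
  "Gof X = \<lparr>gverts = (\<lambda>x. comp (ends X) (vm X \<union> am X) x) ` nodes X,
            gedges = squares X,
            ginc = (\<lambda>s K. card {e\<in>vm X. ends X e \<subseteq> s \<and> ends X e \<subseteq> K})\<rparr>"

text \<open>GF(2)-vectors on the edge set are represented as edge subsets (sum = symmetric
  difference). The coboundary of a vertex set U is the set of edges with an odd number of
  ends in U.\<close>

definition coboundary :: "('a, 'b) mgraph \<Rightarrow> 'a set \<Rightarrow> 'b set" where
  "coboundary G U = {e\<in>gedges G. odd (\<Sum>x\<in>U. ginc G e x)}"

definition cob_space :: "('a, 'b) mgraph \<Rightarrow> 'b set set" where
  "cob_space G = {coboundary G U | U. U \<subseteq> gverts G}"

definition orth :: "'b set \<Rightarrow> 'b set set \<Rightarrow> 'b set set" where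
  "orth E W = {S. S \<subseteq> E \<and> (\<forall>T\<in>W. even (card (S \<inter> T)))}"

definition symdiff :: "'b set \<Rightarrow> 'b set \<Rightarrow> 'b set" where
  "symdiff A B = (A - B) \<union> (B - A)"

definition space_sum :: "'b set set \<Rightarrow> 'b set set \<Rightarrow> 'b set set" where
  "space_sum A B = {symdiff a b | a b. a \<in> A \<and> b \<in> B}"

definition rich :: "('v, 'e) cmap \<Rightarrow> bool" where
  "rich M \<longleftrightarrow> is_map M \<and>
     orth (squares M) (cob_space (Gof M)) =
       space_sum (cob_space (Gof (dual M))) (cob_space (Gof (phial M)))"

definition mgraph_iso :: "('a, 'b) mgraph \<Rightarrow> ('c, 'd) mgraph \<Rightarrow> bool" where
  "mgraph_iso G H \<longleftrightarrow> (\<exists>\<phi> \<psi>. bij_betw \<phi> (gverts G) (gverts H) \<and> bij_betw \<psi> (gedges G) (gedges H) \<and>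
     (\<forall>e\<in>gedges G. \<forall>x\<in>gverts G. ginc H (\<psi> e) (\<phi> x) = ginc G e x))"

text \<open>Map-rich: isomorphic to G_M for some rich map M. Vertices and edges of M are labelled by
  natural numbers, which loses no generality since maps are finite.\<close>

definition map_rich :: "('a, 'b) mgraph \<Rightarrow> bool" where
  "map_rich G \<longleftrightarrow> (\<exists>M :: (nat, nat) cmap. rich M \<and> mgraph_iso G (Gof M))"

definition complete_graph :: "nat \<Rightarrow> (nat, nat set) mgraph" where
  "complete_graph m = \<lparr>gverts = {..<m},
                       gedges = {{i, j} | i j. i < m \<and> j < m \<and> i \<noteq> j},
                       ginc = (\<lambda>e x. if x \<in> e then 1 else 0)\<rparr>"

end

theory Submission
  imports Defs "HOL-Library.Countable"
begin

text \<open>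
  For every m \<ge> 2 a rich map is built from K_m. Its nodes are two
  copies (u, w, 0), (u, w, 1) of each dart u \<rightarrow> w. The v-edges join the two copies of a dart and
  the a-edges join (u, w, 1) to (u, w', 0), where w' follows w in a cyclic order of the other
  vertices, so the cycles of v \<union> a are the vertices of K_m; the f-edges join the copies of u \<rightarrow> w
  to those of w \<rightarrow> u, so the squares are the edges of K_m and G_M = K_m.

  A face K of the dual or of the phial (a cycle of f \<union> a, resp. z \<union> a) crosses the square of uw
  iff exactly one of (u, w, 0), (u, w, 1) lies on K. The a-edges of K match its copies (u, w, 1)
  with its copies (u, w', 0), so K crosses the star of u evenly, and F + Z \<subseteq> V^\<bottom>.
  Conversely V^\<bottom> is the cycle space of K_m, spanned by the fundamental cycles of the chords ab
  (a + 2 \<le> b) of the path 0, 1, ..., m - 1. By induction on b - a each of them is a sum of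
  triangles a, a+1, a+2, which bound faces of the dual, and of quadrangles a, b, a+1, b+1, which
  bound faces of the dual or of the phial according to the parity of a + b; twisting the f-edges
  by the parity of u + w is what makes this happen.
\<close>

section \<open>Connected components\<close>

lemma sym_adj_rel: "sym (adj_rel en S)"
  unfolding adj_rel_def sym_def by (auto simp: insert_commute)

lemma adj_rel_Un: "adj_rel en (A \<union> B) = adj_rel en A \<union> adj_rel en B"
  unfolding adj_rel_def by auto

lemma comp_self [simp]: "x \<in> comp en S x"
  unfolding comp_def by auto

lemma comp_adj_closed: "y \<in> comp en S x \<Longrightarrow> (y, z) \<in> adj_rel en S \<Longrightarrow> z \<in> comp en S x"
  unfolding comp_def by auto

lemma comp_eq_if_mem:
  assumes "y \<in> comp en S x"
  shows "comp en S y = comp en S x"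
proof -
  have "(x, y) \<in> (adj_rel en S)\<^sup>*" "(y, x) \<in> (adj_rel en S)\<^sup>*"
    using assms symD[OF sym_rtrancl[OF sym_adj_rel]] unfolding comp_def by auto
  then show ?thesis
    unfolding comp_def by (auto intro: rtrancl_trans)
qed

lemma comp_subset_if_closed:
  assumes "x \<in> A" and "\<And>y z. (y, z) \<in> adj_rel en S \<Longrightarrow> y \<in> A \<Longrightarrow> z \<in> A"
  shows "comp en S x \<subseteq> A"
proof
  fix y assume "y \<in> comp en S x"
  then have "(x, y) \<in> (adj_rel en S)\<^sup>*" unfolding comp_def by auto
  then show "y \<in> A" by (induction rule: rtrancl_induct) (use assms in auto)
qed

section \<open>Edge spaces over GF(2)\<close>

lemma symdiff_iff: "x \<in> symdiff A B \<longleftrightarrow> (x \<in> A) \<noteq> (x \<in> B)"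
  unfolding symdiff_def by auto

lemma symdiff_subset_Un: "symdiff A B \<subseteq> A \<union> B"
  unfolding symdiff_def by auto

lemma symdiff_subset: "A \<subseteq> C \<Longrightarrow> B \<subseteq> C \<Longrightarrow> symdiff A B \<subseteq> C"
  unfolding symdiff_def by blast

lemma symdiff_empty [simp]: "symdiff A {} = A" "symdiff {} A = A"
  unfolding symdiff_def by auto

lemma symdiff_symdiff_cancel: "symdiff (symdiff A B) B = A"
  unfolding symdiff_def by blast

lemma symdiff_symdiff_swap:
  "symdiff (symdiff A B) (symdiff C D) = symdiff (symdiff A C) (symdiff B D)"
  unfolding set_eq_iff symdiff_iff by blast

lemma symdiff_Int: "symdiff A B \<inter> T = symdiff (A \<inter> T) (B \<inter> T)"
  unfolding symdiff_def by auto

lemma odd_sum_symdiff_iff: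
  fixes g :: "'a \<Rightarrow> nat"
  assumes "finite A" "finite B"
  shows "odd (sum g (symdiff A B)) \<longleftrightarrow> odd (sum g A) \<noteq> odd (sum g B)"
proof -
  have "sum g (symdiff A B) = sum g (A - B) + sum g (B - A)"
    unfolding symdiff_def using assms by (intro sum.union_disjoint) auto
  moreover have "sum g A = sum g (A \<inter> B) + sum g (A - B)"
    using assms(1) by (rule sum.Int_Diff)
  moreover have "sum g B = sum g (A \<inter> B) + sum g (B - A)"
    using sum.Int_Diff[OF assms(2), of g A] by (simp add: Int_commute)
  ultimately show ?thesis by presburger
qed

lemma even_card_symdiff_iff:
  assumes "finite A" "finite B"
  shows "even (card (symdiff A B)) \<longleftrightarrow> even (card A) = even (card B)"
  using odd_sum_symdiff_iff[OF assms, of "\<lambda>_. 1"] by auto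

lemma even_card_symdiff_Int:
  assumes "finite T" "even (card (A \<inter> T))" "even (card (B \<inter> T))"
  shows "even (card (symdiff A B \<inter> T))"
  using even_card_symdiff_iff[of "A \<inter> T" "B \<inter> T"] assms unfolding symdiff_Int by auto

lemma coboundary_subset: "coboundary G U \<subseteq> gedges G"
  unfolding coboundary_def by auto

lemma coboundary_empty [simp]: "coboundary G {} = {}"
  unfolding coboundary_def by simp

lemma coboundary_singleton: "coboundary G {K} = {s \<in> gedges G. odd (ginc G s K)}"
  unfolding coboundary_def by simp

lemma coboundary_symdiff:
  assumes "finite U" "finite U'"
  shows "coboundary G (symdiff U U') = symdiff (coboundary G U) (coboundary G U')"
  unfolding coboundary_def set_eq_iff symdiff_iff mem_Collect_eq
  using odd_sum_symdiff_iff[OF assms] by blast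

lemma coboundary_insert:
  assumes "finite U" "K \<notin> U"
  shows "coboundary G (insert K U) = symdiff (coboundary G {K}) (coboundary G U)"
proof -
  have "symdiff {K} U = insert K U" using assms(2) unfolding symdiff_def by blast
  then show ?thesis using coboundary_symdiff[of "{K}" U G] assms(1) by simp
qed

lemma cob_spaceE:
  assumes "T \<in> cob_space G"
  obtains U where "U \<subseteq> gverts G" "T = coboundary G U"
  using assms unfolding cob_space_def by blast

lemma empty_in_cob_space: "{} \<in> cob_space G"
  unfolding cob_space_def mem_Collect_eq by (intro exI[of _ "{}"]) simp

lemma coboundary_singleton_in_cob_space: "K \<in> gverts G \<Longrightarrow> coboundary G {K} \<in> cob_space G"
  unfolding cob_space_def mem_Collect_eq by (intro exI[of _ "{K}"]) simp

lemma finite_cob_space_mem: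
  assumes "finite (gedges G)" "T \<in> cob_space G"
  shows "finite T"
proof -
  obtain U where "T = coboundary G U" using assms(2) by (rule cob_spaceE)
  then show ?thesis using finite_subset[OF coboundary_subset assms(1)] by simp
qed

lemma cob_space_symdiff:
  assumes "finite (gverts G)" "A \<in> cob_space G" "B \<in> cob_space G"
  shows "symdiff A B \<in> cob_space G"
proof -
  obtain U U' where U: "U \<subseteq> gverts G" "U' \<subseteq> gverts G"
    and AB: "A = coboundary G U" "B = coboundary G U'"
    using cob_spaceE[OF assms(2)] cob_spaceE[OF assms(3)] by metis
  have "finite U" "finite U'" using U finite_subset[OF _ assms(1)] by auto
  then have "symdiff A B = coboundary G (symdiff U U')"
    unfolding AB by (rule coboundary_symdiff[symmetric])
  moreover have "symdiff U U' \<subseteq> gverts G" using U by (rule symdiff_subset)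
  ultimately show ?thesis
    unfolding cob_space_def mem_Collect_eq by (intro exI[of _ "symdiff U U'"] conjI)
qed

lemma even_card_coboundary_Int:
  assumes "finite U" "finite T" "\<And>K. K \<in> U \<Longrightarrow> even (card (coboundary G {K} \<inter> T))"
  shows "even (card (coboundary G U \<inter> T))"
  using assms
proof (induction U rule: finite_induct)
  case (insert K U)
  then show ?case
    unfolding coboundary_insert[OF insert(1,2)] by (intro even_card_symdiff_Int) auto
qed simp

lemma even_card_coboundaries_Int:
  assumes "finite (gedges G)" "finite (gedges H)" "finite U" "finite W"
    and "\<And>K L. K \<in> U \<Longrightarrow> L \<in> W \<Longrightarrow> even (card (coboundary G {K} \<inter> coboundary H {L}))"
  shows "even (card (coboundary G U \<inter> coboundary H W))"
proof (rule even_card_coboundary_Int[OF assms(3)])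
  show "finite (coboundary H W)" using finite_subset[OF coboundary_subset assms(2)] .
  fix K assume K: "K \<in> U"
  have "even (card (coboundary H W \<inter> coboundary G {K}))"
  proof (rule even_card_coboundary_Int[OF assms(4)])
    show "finite (coboundary G {K})" using finite_subset[OF coboundary_subset assms(1)] .
  qed (use assms(5)[OF K] in \<open>simp add: Int_commute\<close>)
  then show "even (card (coboundary G {K} \<inter> coboundary H W))" by (simp add: Int_commute)
qed

lemma space_sum_symdiff:
  assumes "finite (gverts G)" "finite (gverts H)"
    and "A \<in> space_sum (cob_space G) (cob_space H)" "B \<in> space_sum (cob_space G) (cob_space H)"
  shows "symdiff A B \<in> space_sum (cob_space G) (cob_space H)"
proof -
  obtain A1 A2 B1 B2 where AB: "A = symdiff A1 A2" "B = symdiff B1 B2"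
    and cob: "A1 \<in> cob_space G" "B1 \<in> cob_space G" "A2 \<in> cob_space H" "B2 \<in> cob_space H"
    using assms(3,4) unfolding space_sum_def by blast
  have "symdiff A B = symdiff (symdiff A1 B1) (symdiff A2 B2)"
    unfolding AB by (rule symdiff_symdiff_swap)
  moreover have "symdiff A1 B1 \<in> cob_space G" using assms(1) cob(1,2) by (rule cob_space_symdiff)
  moreover have "symdiff A2 B2 \<in> cob_space H" using assms(2) cob(3,4) by (rule cob_space_symdiff)
  ultimately show ?thesis
    unfolding space_sum_def mem_Collect_eq
    by (intro exI[of _ "symdiff A1 B1"] exI[of _ "symdiff A2 B2"]) simp
qed

lemma cob_space_subset_space_sum:
  "cob_space G \<subseteq> space_sum (cob_space G) (cob_space H)"
  "cob_space H \<subseteq> space_sum (cob_space G) (cob_space H)"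
proof
  fix A assume "A \<in> cob_space G"
  then show "A \<in> space_sum (cob_space G) (cob_space H)"
    unfolding space_sum_def mem_Collect_eq using empty_in_cob_space
    by (intro exI[of _ A] exI[of _ "{}"]) simp
next
  show "cob_space H \<subseteq> space_sum (cob_space G) (cob_space H)"
  proof
    fix B assume "B \<in> cob_space H"
    then show "B \<in> space_sum (cob_space G) (cob_space H)"
      unfolding space_sum_def mem_Collect_eq using empty_in_cob_space
      by (intro exI[of _ "{}"] exI[of _ B]) simp
  qed
qed

lemma empty_in_space_sum: "{} \<in> space_sum (cob_space G) (cob_space H)"
  using cob_space_subset_space_sum(1) empty_in_cob_space by blast

lemma orth_symdiff:
  assumes "\<And>T. T \<in> W \<Longrightarrow> finite T" "A \<in> orth E W" "B \<in> orth E W"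
  shows "symdiff A B \<in> orth E W"
proof -
  have "symdiff A B \<subseteq> E" using assms(2,3) symdiff_subset_Un[of A B] unfolding orth_def by blast
  moreover have "even (card (symdiff A B \<inter> T))" if "T \<in> W" for T
    using assms that by (intro even_card_symdiff_Int) (auto simp: orth_def)
  ultimately show ?thesis unfolding orth_def mem_Collect_eq by blast
qed

section \<open>The map\<close>

text \<open>rot m u is the cyclic permutation of {..<m} - {u} listing its elements in increasing
  order.\<close>

definition rot :: "nat \<Rightarrow> nat \<Rightarrow> nat \<Rightarrow> nat" where
  "rot m u w = (if w + 1 = m then (if u = 0 then 1 else 0)
                else if w + 1 = u then (if w + 2 = m then 0 else w + 2) else w + 1)"

definition rot_inv :: "nat \<Rightarrow> nat \<Rightarrow> nat \<Rightarrow> nat" where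
  "rot_inv m u w = (if w = 0 then (if u + 1 = m then m - 2 else m - 1)
                    else if w = u + 1 then (if u = 0 then m - 1 else u - 1) else w - 1)"

lemma rot_props:
  assumes "2 \<le> m" "u < m" "w < m" "w \<noteq> u"
  shows "rot m u w < m" "rot m u w \<noteq> u" "rot_inv m u (rot m u w) = w"
  using assms unfolding rot_def rot_inv_def by auto

lemma rot_inv_props:
  assumes "2 \<le> m" "u < m" "w < m" "w \<noteq> u"
  shows "rot_inv m u w < m" "rot_inv m u w \<noteq> u" "rot m u (rot_inv m u w) = w"
  using assms unfolding rot_def rot_inv_def by (auto split: if_splits)

text \<open>The node (u, w, s) and the edge of type t (0, 1, 2 for v-, a-, f-edges) with data u, w, s
  are encoded as natural numbers by to_nat.\<close>

definition node :: "nat \<Rightarrow> nat \<Rightarrow> nat \<Rightarrow> nat" where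
  "node u w s = to_nat (u, w, s)"

definition edge :: "nat \<Rightarrow> nat \<Rightarrow> nat \<Rightarrow> nat \<Rightarrow> nat" where
  "edge t u w s = to_nat (t, u, w, s)"

lemma node_eq_iff [simp]: "node u w s = node u' w' s' \<longleftrightarrow> u = u' \<and> w = w' \<and> s = s'"
  unfolding node_def by auto

lemma edge_eq_iff [simp]: "edge t u w s = edge t' u' w' s' \<longleftrightarrow> t = t' \<and> u = u' \<and> w = w' \<and> s = s'"
  unfolding edge_def by auto

definition f_side :: "nat \<Rightarrow> nat \<Rightarrow> nat \<Rightarrow> nat" where
  "f_side u w s = (if odd (u + w) then s else 1 - s)"

definition z_side :: "nat \<Rightarrow> nat \<Rightarrow> nat \<Rightarrow> nat" where
  "z_side u w s = (if odd (u + w) then 1 - s else s)"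

lemma side_commute [simp]: "f_side w u s = f_side u w s" "z_side w u s = z_side u w s"
  unfolding f_side_def z_side_def by (simp_all add: add.commute)

lemma side_less_2 [simp]: "s < 2 \<Longrightarrow> f_side u w s < 2" "s < 2 \<Longrightarrow> z_side u w s < 2"
  unfolding f_side_def z_side_def by auto

lemma side_involution [simp]:
  "s < 2 \<Longrightarrow> f_side u w (f_side u w s) = s" "s < 2 \<Longrightarrow> z_side u w (z_side u w s) = s"
  unfolding f_side_def z_side_def by auto

lemma z_side_eq: "s < 2 \<Longrightarrow> z_side u w s = 1 - f_side u w s"
  unfolding z_side_def f_side_def by auto

definition dart :: "nat \<Rightarrow> nat \<Rightarrow> nat \<Rightarrow> nat \<Rightarrow> bool" where
  "dart m u w s \<longleftrightarrow> u < m \<and> w < m \<and> u \<noteq> w \<and> s < 2"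

definition kends :: "nat \<Rightarrow> nat \<Rightarrow> nat set" where
  "kends m e = (case from_nat e :: nat \<times> nat \<times> nat \<times> nat of (t, u, w, s) \<Rightarrow>
     if t = 0 then {node u w 0, node u w 1}
     else if t = 1 then {node u w 1, node u (rot m u w) 0}
     else {node u w s, node w u (f_side u w s)})"

lemma kends_edge [simp]:
  "kends m (edge t u w s) = (if t = 0 then {node u w 0, node u w 1}
     else if t = 1 then {node u w 1, node u (rot m u w) 0}
     else {node u w s, node w u (f_side u w s)})"
  unfolding kends_def edge_def by (simp only: from_nat_to_nat prod.case)

definition knodes :: "nat \<Rightarrow> nat set" where
  "knodes m = {node u w s | u w s. dart m u w s}"

definition v_edges :: "nat \<Rightarrow> nat set" where
  "v_edges m = {edge 0 u w 0 | u w. dart m u w 0}"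

definition a_edges :: "nat \<Rightarrow> nat set" where
  "a_edges m = {edge 1 u w 0 | u w. dart m u w 0}"

definition f_edges :: "nat \<Rightarrow> nat set" where
  "f_edges m = {edge 2 u w s | u w s. u < w \<and> dart m u w s}"

definition kmap :: "nat \<Rightarrow> (nat, nat) cmap" where
  "kmap m = \<lparr>nodes = knodes m, edges = v_edges m \<union> a_edges m \<union> f_edges m, ends = kends m,
             vm = v_edges m, fm = f_edges m\<rparr>"

lemma kmap_simps [simp]:
  "nodes (kmap m) = knodes m" "edges (kmap m) = v_edges m \<union> a_edges m \<union> f_edges m"
  "ends (kmap m) = kends m" "vm (kmap m) = v_edges m" "fm (kmap m) = f_edges m"
  unfolding kmap_def by simp_all

lemma edge_classes_disjoint:
  "v_edges m \<inter> a_edges m = {}" "v_edges m \<inter> f_edges m = {}" "a_edges m \<inter> f_edges m = {}"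
  unfolding v_edges_def a_edges_def f_edges_def by auto

lemma am_kmap [simp]: "am (kmap m) = a_edges m"
  unfolding am_def using edge_classes_disjoint[of m] by auto

lemma node_in_knodes [simp]: "node u w s \<in> knodes m \<longleftrightarrow> dart m u w s"
  unfolding knodes_def by auto

lemma knodesE:
  assumes "x \<in> knodes m"
  obtains u w s where "dart m u w s" "x = node u w s"
  using assms unfolding knodes_def by auto

lemma finite_knodes: "finite (knodes m)"
proof -
  have "knodes m \<subseteq> (\<lambda>(u, w, s). node u w s) ` ({..<m} \<times> {..<m} \<times> {..<2})"
  proof
    fix x assume "x \<in> knodes m"
    then obtain u w s where "x = node u w s" "dart m u w s" by (rule knodesE)
    then show "x \<in> (\<lambda>(u, w, s). node u w s) ` ({..<m} \<times> {..<m} \<times> {..<2})"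
      by (intro image_eqI[of _ _ "(u, w, s)"]) (auto simp: dart_def)
  qed
  then show ?thesis by (rule finite_subset) auto
qed

lemma finite_kmap_edges: "finite (v_edges m \<union> a_edges m \<union> f_edges m)"
proof -
  have "v_edges m \<union> a_edges m \<union> f_edges m
          \<subseteq> (\<lambda>(t, u, w, s). edge t u w s) ` ({..<3} \<times> {..<m} \<times> {..<m} \<times> {..<2})"
  proof
    fix e assume "e \<in> v_edges m \<union> a_edges m \<union> f_edges m"
    then obtain t u w s where "e = edge t u w s" "t < 3" "dart m u w s"
      unfolding v_edges_def a_edges_def f_edges_def by auto
    then show "e \<in> (\<lambda>(t, u, w, s). edge t u w s) ` ({..<3} \<times> {..<m} \<times> {..<m} \<times> {..<2})"
      by (intro image_eqI[of _ _ "(t, u, w, s)"]) (auto simp: dart_def)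
  qed
  then show ?thesis by (rule finite_subset) auto
qed

text \<open>Each class of edges below is a perfect matching joining every node (u, w, s) to P u w s
  for a step function P.\<close>

definition step_rel :: "nat \<Rightarrow> (nat \<Rightarrow> nat \<Rightarrow> nat \<Rightarrow> nat) \<Rightarrow> (nat \<times> nat) set" where
  "step_rel m P = {(node u w s, P u w s) | u w s. dart m u w s}"

definition v_step :: "nat \<Rightarrow> nat \<Rightarrow> nat \<Rightarrow> nat" where
  "v_step u w s = node u w (1 - s)"

definition a_step :: "nat \<Rightarrow> nat \<Rightarrow> nat \<Rightarrow> nat \<Rightarrow> nat" where
  "a_step m u w s = (if s = 1 then node u (rot m u w) 0 else node u (rot_inv m u w) 1)"

definition f_step :: "nat \<Rightarrow> nat \<Rightarrow> nat \<Rightarrow> nat" where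
  "f_step u w s = node w u (f_side u w s)"

definition z_step :: "nat \<Rightarrow> nat \<Rightarrow> nat \<Rightarrow> nat" where
  "z_step u w s = node w u (z_side u w s)"

lemma step_relI: "dart m u w s \<Longrightarrow> (node u w s, P u w s) \<in> step_rel m P"
  unfolding step_rel_def by blast

lemma step_rel_node_iff: "dart m u w s \<Longrightarrow> (node u w s, y) \<in> step_rel m P \<longleftrightarrow> y = P u w s"
  unfolding step_rel_def by auto

lemma adj_rel_eq_step_rel:
  assumes E_ends: "\<And>e. e \<in> E \<Longrightarrow> \<exists>u w s. dart m u w s \<and> en e = {node u w s, P u w s}"
    and E_cover: "\<And>u w s. dart m u w s \<Longrightarrow> \<exists>e\<in>E. en e = {node u w s, P u w s}"
    and P_inv: "\<And>u w s. dart m u w s \<Longrightarrow>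
      \<exists>u' w' s'. dart m u' w' s' \<and> P u w s = node u' w' s' \<and> P u' w' s' = node u w s"
  shows "adj_rel en E = step_rel m P"
proof (intro set_eqI iffI)
  fix p assume "p \<in> adj_rel en E"
  then obtain x y e where p: "p = (x, y)" and e: "e \<in> E" "en e = {x, y}"
    unfolding adj_rel_def by auto
  obtain u w s where d: "dart m u w s" and xy: "{x, y} = {node u w s, P u w s}"
    using E_ends[OF e(1)] e(2) by auto
  from xy consider "x = node u w s" "y = P u w s" | "x = P u w s" "y = node u w s"
    by (auto simp: doubleton_eq_iff)
  then show "p \<in> step_rel m P"
  proof cases
    case 1
    then show ?thesis using p step_relI[OF d] by simp
  next
    case 2
    obtain u' w' s' where "dart m u' w' s'" "P u w s = node u' w' s'" "P u' w' s' = node u w s"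
      using P_inv[OF d] by blast
    then show ?thesis using p 2 step_relI[of m u' w' s' P] by simp
  qed
next
  fix p assume "p \<in> step_rel m P"
  then obtain u w s where "p = (node u w s, P u w s)" "dart m u w s"
    unfolding step_rel_def by auto
  then show "p \<in> adj_rel en E" using E_cover unfolding adj_rel_def by blast
qed

lemma adj_v_edges: "adj_rel (kends m) (v_edges m) = step_rel m v_step"
proof (rule adj_rel_eq_step_rel)
  fix u w s assume d: "dart m u w s"
  then have "edge 0 u w 0 \<in> v_edges m" unfolding v_edges_def dart_def by auto
  moreover have "kends m (edge 0 u w 0) = {node u w s, v_step u w s}"
    using d by (auto simp: dart_def v_step_def dest: less_2_cases)
  ultimately show "\<exists>e\<in>v_edges m. kends m e = {node u w s, v_step u w s}" by blast
  show "\<exists>u' w' s'. dart m u' w' s' \<and> v_step u w s = node u' w' s' \<and> v_step u' w' s' = node u w s"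
    using d by (intro exI[of _ u] exI[of _ w] exI[of _ "1 - s"]) (auto simp: dart_def v_step_def)
next
  fix e assume "e \<in> v_edges m"
  then obtain u w where "e = edge 0 u w 0" "dart m u w 0" unfolding v_edges_def by auto
  then show "\<exists>u w s. dart m u w s \<and> kends m e = {node u w s, v_step u w s}"
    by (intro exI[of _ u] exI[of _ w] exI[of _ 0]) (simp add: v_step_def)
qed

lemma adj_a_edges:
  assumes m: "2 \<le> m"
  shows "adj_rel (kends m) (a_edges m) = step_rel m (a_step m)"
proof (rule adj_rel_eq_step_rel)
  fix e assume "e \<in> a_edges m"
  then obtain u w where "e = edge 1 u w 0" "dart m u w 0" unfolding a_edges_def by auto
  then show "\<exists>u w s. dart m u w s \<and> kends m e = {node u w s, a_step m u w s}"
    by (intro exI[of _ u] exI[of _ w] exI[of _ 1]) (auto simp: dart_def a_step_def)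
next
  fix u w s assume d: "dart m u w s"
  then have uw: "u < m" "w < m" "w \<noteq> u" "s = 0 \<or> s = 1" by (auto simp: dart_def)
  note r = rot_props[OF m uw(1-3)] and ri = rot_inv_props[OF m uw(1-3)]
  show "\<exists>e\<in>a_edges m. kends m e = {node u w s, a_step m u w s}"
  proof (cases "s = 1")
    case True
    then show ?thesis using uw
      by (intro bexI[of _ "edge 1 u w 0"]) (auto simp: a_edges_def a_step_def dart_def)
  next
    case False
    then show ?thesis using uw ri
      by (intro bexI[of _ "edge 1 u (rot_inv m u w) 0"])
         (auto simp: a_edges_def a_step_def dart_def)
  qed
  show "\<exists>u' w' s'. dart m u' w' s' \<and> a_step m u w s = node u' w' s'
    \<and> a_step m u' w' s' = node u w s"
  proof (cases "s = 1")
    case True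
    then show ?thesis using uw r
      by (intro exI[of _ u] exI[of _ "rot m u w"] exI[of _ 0]) (auto simp: a_step_def dart_def)
  next
    case False
    then show ?thesis using uw ri
      by (intro exI[of _ u] exI[of _ "rot_inv m u w"] exI[of _ 1]) (auto simp: a_step_def dart_def)
  qed
qed

lemma adj_f_edges: "adj_rel (kends m) (f_edges m) = step_rel m f_step"
proof (rule adj_rel_eq_step_rel)
  fix u w s assume d: "dart m u w s"
  show "\<exists>e\<in>f_edges m. kends m e = {node u w s, f_step u w s}"
  proof (cases "u < w")
    case True
    then show ?thesis using d
      by (intro bexI[of _ "edge 2 u w s"]) (auto simp: f_edges_def f_step_def)
  next
    case False
    then show ?thesis using d
      by (intro bexI[of _ "edge 2 w u (f_side u w s)"]) (auto simp: f_edges_def f_step_def dart_def)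
  qed
  show "\<exists>u' w' s'. dart m u' w' s' \<and> f_step u w s = node u' w' s' \<and> f_step u' w' s' = node u w s"
    using d by (intro exI[of _ w] exI[of _ u] exI[of _ "f_side u w s"])
      (auto simp: f_step_def dart_def)
next
  fix e assume "e \<in> f_edges m"
  then obtain u w s where "e = edge 2 u w s" "dart m u w s" unfolding f_edges_def by auto
  then show "\<exists>u w s. dart m u w s \<and> kends m e = {node u w s, f_step u w s}"
    by (auto simp: f_step_def)
qed

lemma comp_subset_step_closed:
  assumes "adj_rel en S = step_rel m P \<union> step_rel m Q" "x \<in> L"
    and "\<And>u w s. dart m u w s \<Longrightarrow> node u w s \<in> L \<Longrightarrow> P u w s \<in> L \<and> Q u w s \<in> L"
  shows "comp en S x \<subseteq> L"
  using assms(2) by (rule comp_subset_if_closed) (use assms in \<open>auto simp: step_rel_def\<close>)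

lemma step_in_comp:
  assumes "adj_rel en S = step_rel m P \<union> step_rel m Q" "dart m u w s" "node u w s \<in> comp en S x"
  shows "P u w s \<in> comp en S x" "Q u w s \<in> comp en S x"
  using comp_adj_closed[OF assms(3)] step_relI[OF assms(2)] assms(1) by auto

definition sq :: "nat \<Rightarrow> nat \<Rightarrow> nat set" where
  "sq u w = {node u w 0, node u w 1, node w u 0, node w u 1}"

lemma sq_commute: "sq w u = sq u w"
  unfolding sq_def by auto

lemma node_in_sq_iff: "node a b t \<in> sq u w \<longleftrightarrow> t < 2 \<and> (a = u \<and> b = w \<or> a = w \<and> b = u)"
  unfolding sq_def by auto

lemma sq_eq_iff: "sq a b = sq u w \<longleftrightarrow> a = u \<and> b = w \<or> a = w \<and> b = u"
proof
  assume "sq a b = sq u w"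
  moreover have "node a b 0 \<in> sq a b" by (simp add: node_in_sq_iff)
  ultimately have "node a b 0 \<in> sq u w" by simp
  then show "a = u \<and> b = w \<or> a = w \<and> b = u" by (simp add: node_in_sq_iff)
qed (auto simp: sq_commute)

lemma card_sq: "u \<noteq> w \<Longrightarrow> card (sq u w) = 4"
  unfolding sq_def by auto

lemma sq_eq_steps:
  assumes "dart m u w s"
  shows "sq u w = {node u w s, v_step u w s, f_step u w s, z_step u w s}"
  using assms unfolding dart_def
  by (auto simp: sq_def v_step_def f_step_def z_step_def f_side_def z_side_def dest!: less_2_cases)

lemma adj_vf_edges:
  "adj_rel (kends m) (v_edges m \<union> f_edges m) = step_rel m v_step \<union> step_rel m f_step"
  by (simp add: adj_rel_Un adj_v_edges adj_f_edges)

lemma comp_vf_edges: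
  assumes d: "dart m u w s"
  shows "comp (kends m) (v_edges m \<union> f_edges m) (node u w s) = sq u w"
proof
  show "comp (kends m) (v_edges m \<union> f_edges m) (node u w s) \<subseteq> sq u w"
    by (rule comp_subset_step_closed[OF adj_vf_edges])
       (use d in \<open>auto simp: node_in_sq_iff dart_def v_step_def f_step_def\<close>)
next
  let ?C = "comp (kends m) (v_edges m \<union> f_edges m) (node u w s)"
  have d': "dart m w u (f_side u w s)" using d by (simp add: dart_def)
  have "v_step u w s \<in> ?C" "f_step u w s \<in> ?C"
    using step_in_comp[OF adj_vf_edges d comp_self] by auto
  moreover have "z_step u w s \<in> ?C"
    using step_in_comp(1)[OF adj_vf_edges d' \<open>f_step u w s \<in> ?C\<close>[unfolded f_step_def]] d
    by (simp add: v_step_def z_step_def z_side_eq dart_def)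
  ultimately show "sq u w \<subseteq> ?C" using sq_eq_steps[OF d] by simp
qed

lemma sq_in_ordered_sqs:
  "u < m \<Longrightarrow> w < m \<Longrightarrow> u \<noteq> w \<Longrightarrow> sq u w \<in> {sq u w | u w. u < w \<and> w < m}"
proof (cases "u < w")
  case False
  moreover assume "u < m" "u \<noteq> w"
  ultimately have "sq u w = sq w u \<and> w < u \<and> u < m" using sq_commute by auto
  then show ?thesis by blast
qed blast

lemma squares_kmap: "squares (kmap m) = {sq u w | u w. u < w \<and> w < m}"
proof (intro set_eqI iffI)
  fix q assume "q \<in> squares (kmap m)"
  then obtain x where "x \<in> knodes m" "q = comp (kends m) (v_edges m \<union> f_edges m) x"
    unfolding squares_def by auto
  then obtain u w s where "dart m u w s" "q = sq u w"
    using comp_vf_edges by (metis knodesE)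
  then show "q \<in> {sq u w | u w. u < w \<and> w < m}" using sq_in_ordered_sqs by (simp add: dart_def)
next
  fix q assume "q \<in> {sq u w | u w. u < w \<and> w < m}"
  then obtain u w where q: "q = sq u w" and d: "dart m u w 0" by (auto simp: dart_def)
  then have "q = comp (kends m) (v_edges m \<union> f_edges m) (node u w 0)"
    using comp_vf_edges by simp
  then show "q \<in> squares (kmap m)" unfolding squares_def using d by simp
qed

lemma finite_squares_kmap: "finite (squares (kmap m))"
  unfolding squares_def using finite_knodes by simp

lemma sq_in_squares_kmap: "u < m \<Longrightarrow> w < m \<Longrightarrow> u \<noteq> w \<Longrightarrow> sq u w \<in> squares (kmap m)"
  unfolding squares_kmap by (rule sq_in_ordered_sqs)

lemma diagonal_iff:
  assumes d: "dart m u w s"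
  shows "y \<noteq> node u w s \<and> y \<in> sq u w \<and> \<not> (\<exists>e\<in>v_edges m \<union> f_edges m. kends m e = {node u w s, y})
    \<longleftrightarrow> y = z_step u w s"
proof -
  have "(\<exists>e\<in>v_edges m \<union> f_edges m. kends m e = {node u w s, y})
      \<longleftrightarrow> (node u w s, y) \<in> adj_rel (kends m) (v_edges m \<union> f_edges m)"
    unfolding adj_rel_def by auto
  also have "\<dots> \<longleftrightarrow> y = v_step u w s \<or> y = f_step u w s"
    unfolding adj_vf_edges using step_rel_node_iff[OF d] by auto
  finally have adj: "(\<exists>e\<in>v_edges m \<union> f_edges m. kends m e = {node u w s, y})
    \<longleftrightarrow> y = v_step u w s \<or> y = f_step u w s" .
  have "f_side u w s < 2" using d by (simp add: dart_def)
  then have "1 - f_side u w s \<noteq> f_side u w s" by arith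
  then have "z_step u w s \<notin> {node u w s, v_step u w s, f_step u w s}"
    using d by (auto simp: v_step_def f_step_def z_step_def z_side_eq dart_def)
  then show ?thesis unfolding adj sq_eq_steps[OF d] by auto
qed

lemma zdiag_kmap: "zdiag (kmap m) = {{node u w s, z_step u w s} | u w s. dart m u w s}"
proof (intro set_eqI iffI)
  fix d assume "d \<in> zdiag (kmap m)"
  then obtain x y where x: "x \<in> knodes m" and d: "d = {x, y}" and y: "y \<noteq> x"
    "y \<in> comp (kends m) (v_edges m \<union> f_edges m) x"
    "\<not> (\<exists>e\<in>v_edges m \<union> f_edges m. kends m e = {x, y})"
    unfolding zdiag_def by auto
  obtain u w s where uws: "dart m u w s" "x = node u w s" using x by (rule knodesE)
  then have "y = z_step u w s"
    using diagonal_iff[OF uws(1), of y] comp_vf_edges[OF uws(1)] y by blast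
  then show "d \<in> {{node u w s, z_step u w s} | u w s. dart m u w s}" using uws d by blast
next
  fix d assume "d \<in> {{node u w s, z_step u w s} | u w s. dart m u w s}"
  then obtain u w s where uws: "dart m u w s" "d = {node u w s, z_step u w s}" by blast
  then have "z_step u w s \<noteq> node u w s
    \<and> z_step u w s \<in> comp (kends m) (v_edges m \<union> f_edges m) (node u w s)
    \<and> \<not> (\<exists>e\<in>v_edges m \<union> f_edges m. kends m e = {node u w s, z_step u w s})"
    using diagonal_iff[OF uws(1)] comp_vf_edges[OF uws(1)] by simp
  then show "d \<in> zdiag (kmap m)"
    unfolding zdiag_def using uws by auto
qed

definition a_edge_at :: "nat \<Rightarrow> nat \<Rightarrow> nat \<Rightarrow> nat \<Rightarrow> nat" where
  "a_edge_at m u w s = (if s = 1 then edge 1 u w 0 else edge 1 u (rot_inv m u w) 0)"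

definition f_edge_at :: "nat \<Rightarrow> nat \<Rightarrow> nat \<Rightarrow> nat" where
  "f_edge_at u w s = (if u < w then edge 2 u w s else edge 2 w u (f_side u w s))"

lemma v_edges_at:
  "dart m u w s \<Longrightarrow> {e \<in> v_edges m. node u w s \<in> kends m e} = {edge 0 u w 0}"
  unfolding v_edges_def dart_def by (auto dest: less_2_cases)

lemma a_edges_at:
  assumes m: "2 \<le> m" and d: "dart m u w s"
  shows "{e \<in> a_edges m. node u w s \<in> kends m e} = {a_edge_at m u w s}"
proof -
  have uw: "u < m" "w < m" "w \<noteq> u" "s = 0 \<or> s = 1" using d by (auto simp: dart_def)
  have "node u w s \<in> kends m (edge 1 a b 0) \<longleftrightarrow> edge 1 a b 0 = a_edge_at m u w s"
    if "dart m a b 0" for a b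
    using that uw rot_props[OF m, of a b] rot_inv_props[OF m uw(1-3)]
    by (auto simp: a_edge_at_def dart_def)
  moreover have "a_edge_at m u w s \<in> a_edges m"
    using uw rot_inv_props[OF m uw(1-3)] by (auto simp: a_edge_at_def a_edges_def dart_def)
  ultimately show ?thesis unfolding a_edges_def by auto
qed

lemma f_edges_at:
  assumes "dart m u w s"
  shows "{e \<in> f_edges m. node u w s \<in> kends m e} = {f_edge_at u w s}"
proof -
  have "node u w s \<in> kends m (edge 2 a b t) \<longleftrightarrow> edge 2 a b t = f_edge_at u w s"
    if "a < b" "dart m a b t" for a b t
    using that assms by (auto simp: f_edge_at_def dart_def)
  moreover have "f_edge_at u w s \<in> f_edges m"
    using assms by (auto simp: f_edge_at_def f_edges_def dart_def)
  ultimately show ?thesis unfolding f_edges_def by auto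
qed

lemma kends_subset_knodes_card:
  assumes m: "2 \<le> m" and e: "e \<in> v_edges m \<union> a_edges m \<union> f_edges m"
  shows "kends m e \<subseteq> knodes m \<and> card (kends m e) = 2"
proof -
  consider (v) u w where "e = edge 0 u w 0" "dart m u w 0"
    | (a) u w where "e = edge 1 u w 0" "dart m u w 0"
    | (f) u w s where "e = edge 2 u w s" "dart m u w s"
    using e unfolding v_edges_def a_edges_def f_edges_def by blast
  then show ?thesis
  proof cases
    case (a u w)
    then have "rot m u w < m" "u \<noteq> rot m u w" using rot_props[OF m, of u w] by (auto simp: dart_def)
    then show ?thesis using a by (auto simp: dart_def)
  qed (auto simp: dart_def)
qed

lemma cubic_graph_kmap:
  assumes m: "2 \<le> m"
  shows "cubic_graph (kmap m)"
  unfolding cubic_graph_def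
proof (intro conjI ballI)
  fix x assume "x \<in> nodes (kmap m)"
  then obtain u w s where d: "dart m u w s" and x: "x = node u w s" by (auto elim: knodesE)
  have "{e \<in> edges (kmap m). x \<in> ends (kmap m) e}
          = {edge 0 u w 0} \<union> {a_edge_at m u w s} \<union> {f_edge_at u w s}"
    using v_edges_at[OF d] a_edges_at[OF m d] f_edges_at[OF d] x by auto
  then show "card {e \<in> edges (kmap m). x \<in> ends (kmap m) e} = 3"
    by (simp add: a_edge_at_def f_edge_at_def)
qed (use finite_knodes finite_kmap_edges kends_subset_knodes_card[OF m] in auto)

lemma perfect_matchingI:
  assumes "S \<subseteq> edges M" "\<And>x. x \<in> nodes M \<Longrightarrow> \<exists>a. {e \<in> S. x \<in> ends M e} = {a}"
  shows "perfect_matching M S"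
  unfolding perfect_matching_def
proof (intro conjI ballI assms(1))
  fix x assume "x \<in> nodes M"
  then obtain a where "{e \<in> S. x \<in> ends M e} = {a}" using assms(2) by blast
  then show "\<exists>!e. e \<in> S \<and> x \<in> ends M e" by (auto simp: set_eq_iff)
qed

lemma is_map_kmap:
  assumes m: "2 \<le> m"
  shows "is_map (kmap m)"
  unfolding is_map_def
proof (intro conjI)
  show "perfect_matching (kmap m) (vm (kmap m))"
    by (rule perfect_matchingI) (auto elim!: knodesE dest!: v_edges_at)
  show "perfect_matching (kmap m) (fm (kmap m))"
    by (rule perfect_matchingI) (auto elim!: knodesE dest!: f_edges_at)
  show "\<forall>x\<in>nodes (kmap m). card (comp (ends (kmap m)) (vm (kmap m) \<union> fm (kmap m)) x) = 4"
    using comp_vf_edges card_sq by (auto elim!: knodesE simp: dart_def)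
qed (use cubic_graph_kmap[OF m] edge_classes_disjoint in auto)

section \<open>G_M is the complete graph\<close>

definition star :: "nat \<Rightarrow> nat \<Rightarrow> nat set" where
  "star m u = {node u w s | w s. dart m u w s}"

lemma node_in_star_iff: "node a b t \<in> star m u \<longleftrightarrow> a = u \<and> dart m u b t"
  unfolding star_def by auto

lemma adj_va_edges:
  "2 \<le> m \<Longrightarrow> adj_rel (kends m) (v_edges m \<union> a_edges m) = step_rel m v_step \<union> step_rel m (a_step m)"
  by (simp add: adj_rel_Un adj_v_edges adj_a_edges)

text \<open>Walking along a- and v-edges from (u, w0, 1), where w0 is the least element of
  {..<m} - {u}, visits the darts at u in increasing order of their heads.\<close>

lemma star_subset_comp:
  assumes m: "2 \<le> m" and u: "u < m"
  defines "w0 \<equiv> if u = 0 then 1 else 0"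
  shows "star m u \<subseteq> comp (kends m) (v_edges m \<union> a_edges m) (node u w0 1)"
proof -
  let ?C = "comp (kends m) (v_edges m \<union> a_edges m) (node u w0 1)"
  note step = step_in_comp[OF adj_va_edges[OF m]]
  have "node u w 0 \<in> ?C \<and> node u w 1 \<in> ?C" if "w < m" "w \<noteq> u" for w
    using that
  proof (induction w rule: less_induct)
    case (less w)
    have d: "dart m u w 0" "dart m u w 1" using less.prems u by (auto simp: dart_def)
    show ?case
    proof (cases "w = w0")
      case True
      then show ?thesis using step(1)[OF d(2) comp_self] by (simp add: v_step_def)
    next
      case False
      define p where "p = (if w = u + 1 then u - 1 else w - 1)"
      have p: "p < w" "p \<noteq> u" "p < m" "rot m u p = w"
        using False less.prems m u unfolding p_def w0_def rot_def by (auto split: if_splits)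
      then have "node u p 1 \<in> ?C" using less.IH by blast
      then have "node u w 0 \<in> ?C"
        using step(2)[of u p 1] p u by (simp add: a_step_def dart_def)
      then show ?thesis using step(1)[OF d(1)] by (simp add: v_step_def)
    qed
  qed
  then show ?thesis unfolding star_def dart_def by (auto dest: less_2_cases)
qed

lemma comp_va_edges:
  assumes m: "2 \<le> m" and d: "dart m u w s"
  shows "comp (kends m) (v_edges m \<union> a_edges m) (node u w s) = star m u"
proof
  show "comp (kends m) (v_edges m \<union> a_edges m) (node u w s) \<subseteq> star m u"
  proof (rule comp_subset_step_closed[OF adj_va_edges[OF m]])
    show "node u w s \<in> star m u" using d by (simp add: node_in_star_iff)
    fix a b t assume "dart m a b t" "node a b t \<in> star m u"
    then have "a = u" "u < m" "b < m" "b \<noteq> u" "t < 2" by (auto simp: node_in_star_iff dart_def)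
    then show "v_step a b t \<in> star m u \<and> a_step m a b t \<in> star m u"
      using rot_props[OF m, of u b] rot_inv_props[OF m, of u b]
      by (auto simp: node_in_star_iff dart_def v_step_def a_step_def)
  qed
  have "node u w s \<in> star m u" using d by (simp add: node_in_star_iff)
  then show "star m u \<subseteq> comp (kends m) (v_edges m \<union> a_edges m) (node u w s)"
    using star_subset_comp[OF m] comp_eq_if_mem d by (metis dart_def subset_iff)
qed

abbreviation GM :: "nat \<Rightarrow> (nat set, nat set) mgraph" where
  "GM m \<equiv> Gof (kmap m)"

lemma dart_at_vertex:
  assumes "2 \<le> m" "u < m"
  obtains w where "dart m u w 0" "dart m u w 1"
  using assms by (cases "u = 0") (auto simp: dart_def intro: that[of 1] that[of 0])

lemma gverts_GM:
  assumes m: "2 \<le> m"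
  shows "gverts (GM m) = star m ` {..<m}"
proof (intro set_eqI iffI)
  fix K assume "K \<in> gverts (GM m)"
  then obtain u w s where "dart m u w s" "K = comp (kends m) (v_edges m \<union> a_edges m) (node u w s)"
    unfolding Gof_def by (auto elim: knodesE)
  then show "K \<in> star m ` {..<m}" using comp_va_edges[OF m] by (auto simp: dart_def)
next
  fix K assume "K \<in> star m ` {..<m}"
  then obtain u where u: "u < m" and K: "K = star m u" by auto
  obtain w where d: "dart m u w 0" using dart_at_vertex[OF m u] by blast
  then have "K = comp (kends m) (v_edges m \<union> a_edges m) (node u w 0)"
    using comp_va_edges[OF m d] K by simp
  then show "K \<in> gverts (GM m)" unfolding Gof_def using d by simp
qed

lemma gedges_GM: "gedges (GM m) = squares (kmap m)"
  unfolding Gof_def by simp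

lemma ginc_GM:
  assumes "i < m" "j < m" "i \<noteq> j" "u < m"
  shows "ginc (GM m) (sq i j) (star m u) = (if u = i \<or> u = j then 1 else 0)"
proof -
  have "{e \<in> v_edges m. kends m e \<subseteq> sq i j \<and> kends m e \<subseteq> star m u}
        = (if u = i then {edge 0 i j 0} else {}) \<union> (if u = j then {edge 0 j i 0} else {})"
    using assms by (auto simp: v_edges_def node_in_sq_iff node_in_star_iff dart_def)
  then show ?thesis unfolding Gof_def using assms by auto
qed

lemma coboundary_star:
  assumes u: "u < m"
  shows "coboundary (GM m) {star m u} = {sq u w | w. w < m \<and> w \<noteq> u}"
proof (intro set_eqI iffI)
  fix q assume "q \<in> coboundary (GM m) {star m u}"
  then obtain a b where q: "q = sq a b" "a < b" "b < m" "odd (ginc (GM m) q (star m u))"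
    unfolding coboundary_singleton gedges_GM squares_kmap by auto
  then have "u = a \<or> u = b" using ginc_GM[of a m b u] u by (auto split: if_splits)
  then show "q \<in> {sq u w | w. w < m \<and> w \<noteq> u}" using q sq_commute by auto
next
  fix q assume "q \<in> {sq u w | w. w < m \<and> w \<noteq> u}"
  then obtain w where "q = sq u w" "w < m" "w \<noteq> u" by blast
  then show "q \<in> coboundary (GM m) {star m u}"
    unfolding coboundary_singleton gedges_GM using sq_in_squares_kmap ginc_GM[of u m w u] u by auto
qed

definition edge_sq :: "nat set \<Rightarrow> nat set" where
  "edge_sq e = {node a b s | a b s. a \<in> e \<and> b \<in> e \<and> a \<noteq> b \<and> s < 2}"

lemma edge_sq_doubleton: "i \<noteq> j \<Longrightarrow> edge_sq {i, j} = sq i j"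
  unfolding edge_sq_def sq_def by (auto dest: less_2_cases)

lemma bij_betw_star:
  assumes m: "2 \<le> m"
  shows "bij_betw (star m) (gverts (complete_graph m)) (gverts (GM m))"
  unfolding gverts_GM[OF m] bij_betw_def
proof
  show "inj_on (star m) (gverts (complete_graph m))"
  proof (rule inj_onI)
    fix u u' assume "u \<in> gverts (complete_graph m)" and eq: "star m u = star m u'"
    then have "u < m" by (simp add: complete_graph_def)
    then obtain w where "dart m u w 0" using dart_at_vertex[OF m] by blast
    then have "node u w 0 \<in> star m u" by (simp add: node_in_star_iff)
    then have "node u w 0 \<in> star m u'" using eq by simp
    then show "u = u'" by (simp add: node_in_star_iff)
  qed
qed (simp add: complete_graph_def)

lemma bij_betw_edge_sq:
  "bij_betw edge_sq (gedges (complete_graph m)) (gedges (GM m))"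
  unfolding gedges_GM squares_kmap bij_betw_def
proof
  show "inj_on edge_sq (gedges (complete_graph m))"
    by (rule inj_onI) (auto simp: complete_graph_def edge_sq_doubleton sq_eq_iff)
  show "edge_sq ` gedges (complete_graph m) = {sq u w | u w. u < w \<and> w < m}"
  proof (intro set_eqI iffI)
    fix q assume "q \<in> edge_sq ` gedges (complete_graph m)"
    then obtain i j where "q = sq i j" "i < m" "j < m" "i \<noteq> j"
      unfolding complete_graph_def by (auto simp: edge_sq_doubleton)
    then show "q \<in> {sq u w | u w. u < w \<and> w < m}" using sq_in_ordered_sqs by blast
  next
    fix q assume "q \<in> {sq u w | u w. u < w \<and> w < m}"
    then obtain i j where q: "q = sq i j" "i < j" "j < m" by auto
    then have "q = edge_sq {i, j}" by (simp add: edge_sq_doubleton)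
    moreover have "{i, j} \<in> gedges (complete_graph m)" using q unfolding complete_graph_def by force
    ultimately show "q \<in> edge_sq ` gedges (complete_graph m)" by blast
  qed
qed

lemma complete_graph_iso_GM:
  assumes m: "2 \<le> m"
  shows "mgraph_iso (complete_graph m) (GM m)"
  unfolding mgraph_iso_def
proof (intro exI[of _ "star m"] exI[of _ edge_sq] conjI ballI)
  show "bij_betw (star m) (gverts (complete_graph m)) (gverts (GM m))" by (rule bij_betw_star[OF m])
  show "bij_betw edge_sq (gedges (complete_graph m)) (gedges (GM m))" by (rule bij_betw_edge_sq)
  fix e x assume "e \<in> gedges (complete_graph m)" "x \<in> gverts (complete_graph m)"
  then obtain i j where "e = {i, j}" "i < m" "j < m" "i \<noteq> j" "x < m"
    unfolding complete_graph_def by auto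
  then show "ginc (GM m) (edge_sq e) (star m x) = ginc (complete_graph m) e x"
    using ginc_GM edge_sq_doubleton unfolding complete_graph_def by auto
qed

section \<open>The dual and the phial\<close>

lemma dual_kmap_simps [simp]:
  "nodes (dual (kmap m)) = knodes m" "ends (dual (kmap m)) = kends m"
  "vm (dual (kmap m)) = f_edges m" "fm (dual (kmap m)) = v_edges m"
  "am (dual (kmap m)) = a_edges m"
  unfolding dual_def am_def using edge_classes_disjoint[of m] by auto

lemma phial_kmap_simps [simp]:
  "nodes (phial (kmap m)) = knodes m" "ends (phial (kmap m)) = qends (kmap m)"
  "vm (phial (kmap m)) = Inr ` zdiag (kmap m)" "fm (phial (kmap m)) = Inl ` f_edges m"
  "am (phial (kmap m)) = Inl ` a_edges m"
  unfolding phial_def am_def using edge_classes_disjoint[of m] by auto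

lemma adj_rel_Inl: "adj_rel (qends M) (Inl ` S) = adj_rel (ends M) S"
  unfolding adj_rel_def qends_def by auto

lemma adj_z_diagonals: "adj_rel (qends (kmap m)) (Inr ` zdiag (kmap m)) = step_rel m z_step"
proof (rule adj_rel_eq_step_rel)
  fix e :: "nat + nat set" assume "e \<in> Inr ` zdiag (kmap m)"
  then obtain u w s where "dart m u w s" "e = Inr {node u w s, z_step u w s}"
    unfolding zdiag_kmap by blast
  then show "\<exists>u w s. dart m u w s \<and> qends (kmap m) e = {node u w s, z_step u w s}"
    unfolding qends_def by auto
next
  fix u w s assume "dart m u w s"
  then have "{node u w s, z_step u w s} \<in> zdiag (kmap m)" unfolding zdiag_kmap by blast
  then show "\<exists>e\<in>Inr ` zdiag (kmap m). qends (kmap m) e = {node u w s, z_step u w s}"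
    unfolding qends_def by force
  show "\<exists>u' w' s'. dart m u' w' s' \<and> z_step u w s = node u' w' s' \<and> z_step u' w' s' = node u w s"
    using \<open>dart m u w s\<close>
    by (intro exI[of _ w] exI[of _ u] exI[of _ "z_side u w s"]) (auto simp: z_step_def dart_def)
qed

lemma adj_zf_edges:
  "adj_rel (qends (kmap m)) (Inr ` zdiag (kmap m) \<union> Inl ` f_edges m)
     = step_rel m z_step \<union> step_rel m f_step"
  by (simp add: adj_rel_Un adj_z_diagonals adj_rel_Inl adj_f_edges)

lemma comp_zf_edges:
  assumes d: "dart m u w s"
  shows "comp (qends (kmap m)) (Inr ` zdiag (kmap m) \<union> Inl ` f_edges m) (node u w s) = sq u w"
proof
  show "comp (qends (kmap m)) (Inr ` zdiag (kmap m) \<union> Inl ` f_edges m) (node u w s) \<subseteq> sq u w"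
    by (rule comp_subset_step_closed[OF adj_zf_edges])
       (use d in \<open>auto simp: node_in_sq_iff dart_def z_step_def f_step_def\<close>)
next
  let ?C = "comp (qends (kmap m)) (Inr ` zdiag (kmap m) \<union> Inl ` f_edges m) (node u w s)"
  have d': "dart m w u (f_side u w s)" using d by (simp add: dart_def)
  have "z_step u w s \<in> ?C" "f_step u w s \<in> ?C"
    using step_in_comp[OF adj_zf_edges d comp_self] by auto
  moreover have "v_step u w s \<in> ?C"
    using step_in_comp(1)[OF adj_zf_edges d' \<open>f_step u w s \<in> ?C\<close>[unfolded f_step_def]] d
    by (simp add: v_step_def z_step_def z_side_eq dart_def)
  ultimately show "sq u w \<subseteq> ?C" using sq_eq_steps[OF d] by simp
qed

lemma squares_dual_kmap: "squares (dual (kmap m)) = squares (kmap m)"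
  unfolding squares_def by (simp add: Un_commute)

lemma squares_phial_kmap: "squares (phial (kmap m)) = squares (kmap m)"
proof -
  have "comp (qends (kmap m)) (Inr ` zdiag (kmap m) \<union> Inl ` f_edges m) x
          = comp (kends m) (v_edges m \<union> f_edges m) x" if "x \<in> knodes m" for x
    using that comp_vf_edges comp_zf_edges by (metis knodesE)
  then show ?thesis unfolding squares_def by simp
qed

abbreviation GD :: "nat \<Rightarrow> (nat set, nat set) mgraph" where
  "GD m \<equiv> Gof (dual (kmap m))"

abbreviation GP :: "nat \<Rightarrow> (nat set, nat set) mgraph" where
  "GP m \<equiv> Gof (phial (kmap m))"

lemma GD_simps:
  "gedges (GD m) = squares (kmap m)"
  "gverts (GD m) = comp (kends m) (f_edges m \<union> a_edges m) ` knodes m"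
  "ginc (GD m) q K = card {e \<in> f_edges m. kends m e \<subseteq> q \<and> kends m e \<subseteq> K}"
  unfolding Gof_def by (simp_all add: squares_dual_kmap)

lemma GP_simps:
  "gedges (GP m) = squares (kmap m)"
  "gverts (GP m) = comp (qends (kmap m)) (Inr ` zdiag (kmap m) \<union> Inl ` a_edges m) ` knodes m"
  "ginc (GP m) q K
     = card {e \<in> Inr ` zdiag (kmap m). qends (kmap m) e \<subseteq> q \<and> qends (kmap m) e \<subseteq> K}"
  unfolding Gof_def by (simp_all add: squares_phial_kmap)

lemma adj_fa_edges:
  "2 \<le> m \<Longrightarrow> adj_rel (kends m) (f_edges m \<union> a_edges m) = step_rel m f_step \<union> step_rel m (a_step m)"
  by (simp add: adj_rel_Un adj_f_edges adj_a_edges)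

lemma adj_za_edges:
  "2 \<le> m \<Longrightarrow> adj_rel (qends (kmap m)) (Inr ` zdiag (kmap m) \<union> Inl ` a_edges m)
     = step_rel m z_step \<union> step_rel m (a_step m)"
  by (simp add: adj_rel_Un adj_z_diagonals adj_rel_Inl adj_a_edges)

lemma mem_comp_step_iff:
  assumes "adj_rel en S = step_rel m P \<union> step_rel m Q" "dart m u w s" "dart m u' w' s'"
    and "P u w s = node u' w' s'" "P u' w' s' = node u w s"
  shows "node u w s \<in> comp en S x \<longleftrightarrow> node u' w' s' \<in> comp en S x"
  using step_in_comp(1)[OF assms(1,2)] step_in_comp(1)[OF assms(1,3)] assms(4,5) by metis

lemma mem_face_a_step_iff:
  assumes m: "2 \<le> m" and adj: "adj_rel en S = step_rel m X \<union> step_rel m (a_step m)"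
    and "u < m" "w < m" "w \<noteq> u"
  shows "node u w 1 \<in> comp en S x \<longleftrightarrow> node u (rot m u w) 0 \<in> comp en S x"
  using assms(3-5) rot_props[OF m assms(3-5)]
  by (intro mem_comp_step_iff[OF adj[unfolded Un_commute[of "step_rel m X"]]])
     (auto simp: dart_def a_step_def)

lemma card_less_2_Collect: "card {s :: nat. s < 2 \<and> P s} = of_bool (P 0) + of_bool (P 1)"
proof -
  have "{s :: nat. s < 2 \<and> P s} = (if P 0 then {0} else {}) \<union> (if P 1 then {1} else {})"
    by (auto dest: less_2_cases)
  then show ?thesis by simp
qed

text \<open>Applied to the v-edges E of the dual and of the phial: inside the square of uw they are
  h 0 and h 1, with h s passing through (u, w, s).\<close>

lemma card_sq_edges_in_face:
  assumes "{e \<in> E. en e \<subseteq> sq u w} = h ` {..<2}" "inj_on h {..<2}"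
    and "\<And>s. s < 2 \<Longrightarrow> en (h s) \<subseteq> K \<longleftrightarrow> node u w s \<in> K"
  shows "card {e \<in> E. en e \<subseteq> sq u w \<and> en e \<subseteq> K}
    = of_bool (node u w 0 \<in> K) + of_bool (node u w 1 \<in> K)"
proof -
  have "{e \<in> E. en e \<subseteq> sq u w \<and> en e \<subseteq> K} = h ` {s. s < 2 \<and> node u w s \<in> K}"
    using assms(1,3) by (auto simp: set_eq_iff image_iff) (metis lessThan_iff)+
  moreover have "inj_on h {s. s < 2 \<and> node u w s \<in> K}"
    using assms(2) by (rule inj_on_subset) auto
  ultimately show ?thesis by (simp add: card_image card_less_2_Collect)
qed

lemma kends_f_edge_at: "dart m u w s \<Longrightarrow> kends m (f_edge_at u w s) = {node u w s, f_step u w s}"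
  by (auto simp: f_edge_at_def f_step_def dart_def)

lemma f_edges_in_sq:
  assumes uw: "u < m" "w < m" "u \<noteq> w"
  shows "{e \<in> f_edges m. kends m e \<subseteq> sq u w} = f_edge_at u w ` {..<2}"
proof (intro set_eqI iffI)
  fix e assume e: "e \<in> {e \<in> f_edges m. kends m e \<subseteq> sq u w}"
  then obtain a b t where ab: "e = edge 2 a b t" "a < b" "dart m a b t"
    unfolding f_edges_def by auto
  with e have "node a b t \<in> sq u w" by auto
  then consider "a = u" "b = w" | "a = w" "b = u" by (auto simp: node_in_sq_iff)
  then obtain s where "s < 2" "node u w s \<in> kends m e"
    using ab by cases (auto simp: dart_def)
  then show "e \<in> f_edge_at u w ` {..<2}"
    using f_edges_at[of m u w s] e uw by (auto simp: dart_def)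
next
  fix e assume "e \<in> f_edge_at u w ` {..<2}"
  then obtain s where s: "s < 2" "e = f_edge_at u w s" by auto
  then have d: "dart m u w s" using uw by (simp add: dart_def)
  then show "e \<in> {e \<in> f_edges m. kends m e \<subseteq> sq u w}"
    using f_edges_at[OF d] kends_f_edge_at[OF d] s by (auto simp: f_step_def node_in_sq_iff)
qed

lemma z_diagonals_in_sq:
  assumes uw: "u < m" "w < m" "u \<noteq> w"
  shows "{e \<in> Inr ` zdiag (kmap m). qends (kmap m) e \<subseteq> sq u w}
           = (\<lambda>s. Inr {node u w s, z_step u w s}) ` {..<2}"
proof (intro set_eqI iffI)
  fix e assume e: "e \<in> {e \<in> Inr ` zdiag (kmap m). qends (kmap m) e \<subseteq> sq u w}"
  then obtain a b t where ab: "e = Inr {node a b t, z_step a b t}" "dart m a b t"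
    unfolding zdiag_kmap by auto
  with e have "node a b t \<in> sq u w" by (auto simp: qends_def)
  then consider "a = u" "b = w" | "a = w" "b = u" by (auto simp: node_in_sq_iff)
  then show "e \<in> (\<lambda>s. Inr {node u w s, z_step u w s}) ` {..<2}"
  proof cases
    case 1
    then show ?thesis using ab by (auto simp: dart_def)
  next
    case 2
    then have "e = Inr {node u w (z_side u w t), z_step u w (z_side u w t)}"
      using ab by (auto simp: z_step_def dart_def)
    then show ?thesis using ab by (auto simp: dart_def)
  qed
next
  fix e :: "nat + nat set" assume "e \<in> (\<lambda>s. Inr {node u w s, z_step u w s}) ` {..<2}"
  then obtain s where s: "s < 2" "e = Inr {node u w s, z_step u w s}" by auto
  then have "dart m u w s" using uw by (simp add: dart_def)
  then show "e \<in> {e \<in> Inr ` zdiag (kmap m). qends (kmap m) e \<subseteq> sq u w}"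
    unfolding zdiag_kmap using s by (auto simp: qends_def z_step_def node_in_sq_iff)
qed

lemma ginc_GD:
  assumes m: "2 \<le> m" and uw: "u < m" "w < m" "u \<noteq> w" and K: "K \<in> gverts (GD m)"
  shows "ginc (GD m) (sq u w) K = of_bool (node u w 0 \<in> K) + of_bool (node u w 1 \<in> K)"
  unfolding GD_simps(3)
proof (rule card_sq_edges_in_face[OF f_edges_in_sq[OF uw]])
  show "inj_on (f_edge_at u w) {..<2}"
    by (auto simp: inj_on_def f_edge_at_def f_side_def)
  fix s :: nat assume "s < 2"
  then have d: "dart m u w s" "dart m w u (f_side u w s)" using uw by (auto simp: dart_def)
  obtain x where "K = comp (kends m) (f_edges m \<union> a_edges m) x" using K unfolding GD_simps by auto
  then show "kends m (f_edge_at u w s) \<subseteq> K \<longleftrightarrow> node u w s \<in> K"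
    using mem_comp_step_iff[OF adj_fa_edges[OF m] d] kends_f_edge_at[OF d(1)] d(1)
    by (auto simp: f_step_def dart_def)
qed

lemma ginc_GP:
  assumes m: "2 \<le> m" and uw: "u < m" "w < m" "u \<noteq> w" and K: "K \<in> gverts (GP m)"
  shows "ginc (GP m) (sq u w) K = of_bool (node u w 0 \<in> K) + of_bool (node u w 1 \<in> K)"
  unfolding GP_simps(3)
proof (rule card_sq_edges_in_face[OF z_diagonals_in_sq[OF uw]])
  show "inj_on (\<lambda>s. Inr {node u w s, z_step u w s}) {..<2}"
    using uw by (auto simp: inj_on_def z_step_def doubleton_eq_iff)
  fix s :: nat assume "s < 2"
  then have d: "dart m u w s" "dart m w u (z_side u w s)" using uw by (auto simp: dart_def)
  obtain x where "K = comp (qends (kmap m)) (Inr ` zdiag (kmap m) \<union> Inl ` a_edges m) x"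
    using K unfolding GP_simps by auto
  then show "qends (kmap m) (Inr {node u w s, z_step u w s}) \<subseteq> K \<longleftrightarrow> node u w s \<in> K"
    using mem_comp_step_iff[OF adj_za_edges[OF m] d] d(1)
    by (auto simp: qends_def z_step_def dart_def)
qed

subsection \<open>F + Z is orthogonal to V\<close>

abbreviation V_orth :: "nat \<Rightarrow> nat set set set" where
  "V_orth m \<equiv> orth (squares (kmap m)) (cob_space (GM m))"

abbreviation FZ :: "nat \<Rightarrow> nat set set set" where
  "FZ m \<equiv> space_sum (cob_space (GD m)) (cob_space (GP m))"

lemma odd_of_bool_add_iff: "odd (of_bool p + of_bool q :: nat) \<longleftrightarrow> p \<noteq> q"
  by (cases p; cases q) auto

lemma coboundary_Int_star:
  assumes u: "u < m" and G: "gedges G = squares (kmap m)"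
    and ginc: "\<And>w. w < m \<Longrightarrow> w \<noteq> u \<Longrightarrow>
      ginc G (sq u w) K = of_bool (node u w 0 \<in> K) + of_bool (node u w 1 \<in> K)"
  shows "coboundary G {K} \<inter> coboundary (GM m) {star m u}
           = sq u ` {w. w < m \<and> w \<noteq> u \<and> (node u w 0 \<in> K) \<noteq> (node u w 1 \<in> K)}"
proof -
  have "sq u w \<in> coboundary G {K} \<longleftrightarrow> (node u w 0 \<in> K) \<noteq> (node u w 1 \<in> K)"
    if "w < m" "w \<noteq> u" for w
    using that u sq_in_squares_kmap ginc odd_of_bool_add_iff by (simp add: coboundary_singleton G)
  then show ?thesis unfolding coboundary_star[OF u] by auto
qed

text \<open>The a-edges at u carry the copies (u, w, 1) in K bijectively to the copies
  (u, rot m u w, 0) in K.\<close>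

lemma card_face_copies_eq:
  assumes m: "2 \<le> m" and u: "u < m"
    and a_closed: "\<And>w. w < m \<Longrightarrow> w \<noteq> u \<Longrightarrow> node u w 1 \<in> K \<longleftrightarrow> node u (rot m u w) 0 \<in> K"
  shows "card {w. w < m \<and> w \<noteq> u \<and> node u w 0 \<in> K} = card {w. w < m \<and> w \<noteq> u \<and> node u w 1 \<in> K}"
proof -
  let ?A0 = "{w. w < m \<and> w \<noteq> u \<and> node u w 0 \<in> K}" and ?A1 = "{w. w < m \<and> w \<noteq> u \<and> node u w 1 \<in> K}"
  have "?A0 = rot m u ` ?A1"
  proof (intro set_eqI iffI)
    fix w assume "w \<in> ?A0"
    then show "w \<in> rot m u ` ?A1"
      using rot_inv_props[OF m u] a_closed[of "rot_inv m u w"]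
      by (auto intro: image_eqI[of _ _ "rot_inv m u w"])
  qed (use rot_props[OF m u] a_closed in auto)
  moreover have "inj_on (rot m u) ?A1"
    by (rule inj_on_inverseI[of _ "rot_inv m u"]) (use rot_props[OF m u] in auto)
  ultimately show ?thesis by (simp add: card_image)
qed

lemma even_card_face_Int_star:
  assumes m: "2 \<le> m" and u: "u < m" and G: "gedges G = squares (kmap m)"
    and a_closed: "\<And>w. w < m \<Longrightarrow> w \<noteq> u \<Longrightarrow> node u w 1 \<in> K \<longleftrightarrow> node u (rot m u w) 0 \<in> K"
    and ginc: "\<And>w. w < m \<Longrightarrow> w \<noteq> u \<Longrightarrow>
      ginc G (sq u w) K = of_bool (node u w 0 \<in> K) + of_bool (node u w 1 \<in> K)"
  shows "even (card (coboundary G {K} \<inter> coboundary (GM m) {star m u}))"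
proof -
  let ?A = "\<lambda>t. {w. w < m \<and> w \<noteq> u \<and> node u w t \<in> K}"
  let ?W = "{w. w < m \<and> w \<noteq> u \<and> (node u w 0 \<in> K) \<noteq> (node u w 1 \<in> K)}"
  have "?W = symdiff (?A 0) (?A 1)" unfolding symdiff_def by auto
  then have "even (card ?W)"
    using even_card_symdiff_iff[of "?A 0" "?A 1"] card_face_copies_eq[OF m u a_closed] by simp
  moreover have "inj_on (sq u) ?W" by (auto simp: inj_on_def sq_eq_iff)
  moreover have "coboundary G {K} \<inter> coboundary (GM m) {star m u} = sq u ` ?W"
    by (rule coboundary_Int_star[OF u G ginc])
  ultimately show ?thesis by (simp add: card_image)
qed

lemma cob_space_subset_V_orth:
  assumes m: "2 \<le> m" and fin: "finite (gverts G)" and G: "gedges G = squares (kmap m)"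
    and orth: "\<And>K u. K \<in> gverts G \<Longrightarrow> u < m \<Longrightarrow>
      even (card (coboundary G {K} \<inter> coboundary (GM m) {star m u}))"
  shows "cob_space G \<subseteq> V_orth m"
proof
  fix A assume "A \<in> cob_space G"
  then obtain U where U: "U \<subseteq> gverts G" "A = coboundary G U" by (rule cob_spaceE)
  have "even (card (A \<inter> T))" if T: "T \<in> cob_space (GM m)" for T
  proof -
    obtain W where "W \<subseteq> gverts (GM m)" "T = coboundary (GM m) W"
      using T by (rule cob_spaceE)
    then have W: "W \<subseteq> star m ` {..<m}" "T = coboundary (GM m) W" by (simp_all add: gverts_GM[OF m])
    show ?thesis unfolding U(2) W(2)
    proof (rule even_card_coboundaries_Int)
      show "finite (gedges G)" "finite (gedges (GM m))"
        using G finite_squares_kmap by (simp_all add: gedges_GM)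
      show "finite U" by (rule finite_subset[OF U(1) fin])
      show "finite W" using finite_subset[OF W(1)] by simp
      fix K L assume "K \<in> U" "L \<in> W"
      then obtain u where "K \<in> gverts G" "u < m" "L = star m u" using U(1) W(1) by auto
      then show "even (card (coboundary G {K} \<inter> coboundary (GM m) {L}))" using orth by simp
    qed
  qed
  moreover have "A \<subseteq> squares (kmap m)" unfolding U(2) G[symmetric] by (rule coboundary_subset)
  ultimately show "A \<in> V_orth m" unfolding orth_def mem_Collect_eq by blast
qed

lemma FZ_subset_V_orth:
  assumes m: "2 \<le> m"
  shows "FZ m \<subseteq> V_orth m"
proof
  have GD: "cob_space (GD m) \<subseteq> V_orth m"
  proof (rule cob_space_subset_V_orth[OF m _ GD_simps(1)])
    show "finite (gverts (GD m))" unfolding GD_simps using finite_knodes by simp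
    fix K u assume "K \<in> gverts (GD m)" "u < m"
    then show "even (card (coboundary (GD m) {K} \<inter> coboundary (GM m) {star m u}))"
      using m GD_simps ginc_GD mem_face_a_step_iff[OF m adj_fa_edges[OF m]]
      by (intro even_card_face_Int_star) auto
  qed
  have GP: "cob_space (GP m) \<subseteq> V_orth m"
  proof (rule cob_space_subset_V_orth[OF m _ GP_simps(1)])
    show "finite (gverts (GP m))" unfolding GP_simps using finite_knodes by simp
    fix K u assume "K \<in> gverts (GP m)" "u < m"
    then show "even (card (coboundary (GP m) {K} \<inter> coboundary (GM m) {star m u}))"
      using m GP_simps ginc_GP mem_face_a_step_iff[OF m adj_za_edges[OF m]]
      by (intro even_card_face_Int_star) auto
  qed
  fix A assume "A \<in> FZ m"
  then obtain B C where "A = symdiff B C" "B \<in> cob_space (GD m)" "C \<in> cob_space (GP m)"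
    unfolding space_sum_def mem_Collect_eq by blast
  moreover have "\<And>T. T \<in> cob_space (GM m) \<Longrightarrow> finite T"
    using finite_cob_space_mem finite_squares_kmap gedges_GM by metis
  ultimately show "A \<in> V_orth m" using GD GP orth_symdiff by blast
qed

section \<open>V-orthogonal sets lie in F + Z\<close>

lemma comp_eq_step_closed:
  assumes adj: "adj_rel en S = step_rel m P \<union> step_rel m Q" and "x \<in> L"
    and "\<And>u w s. dart m u w s \<Longrightarrow> node u w s \<in> L \<Longrightarrow> P u w s \<in> L \<and> Q u w s \<in> L"
    and "L \<subseteq> comp en S x"
  shows "comp en S x = L"
  using comp_subset_step_closed[OF assms(1-3)] assms(4) by blast

definition quad_face :: "nat \<Rightarrow> nat \<Rightarrow> nat set" where
  "quad_face a b = {node a b 1, node b a 1, node b (a+1) 0, node (a+1) b 1,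
     node (a+1) (b+1) 0, node (b+1) (a+1) 0, node (b+1) a 1, node a (b+1) 0}"

definition tri_face :: "nat \<Rightarrow> nat set" where
  "tri_face a = {node a (a+1) 1, node (a+1) a 1, node (a+1) (a+2) 0, node (a+2) (a+1) 0,
     node (a+2) a 1, node a (a+2) 0}"

lemma a_step_quad_face:
  assumes "a + 1 < b" "b + 1 < m"
  shows "a_step m a b 1 = node a (b+1) 0" "a_step m b a 1 = node b (a+1) 0"
    "a_step m b (a+1) 0 = node b a 1" "a_step m (a+1) b 1 = node (a+1) (b+1) 0"
    "a_step m (a+1) (b+1) 0 = node (a+1) b 1" "a_step m (b+1) (a+1) 0 = node (b+1) a 1"
    "a_step m (b+1) a 1 = node (b+1) (a+1) 0" "a_step m a (b+1) 0 = node a b 1"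
  using assms unfolding a_step_def rot_def rot_inv_def by auto

lemma a_step_tri_face:
  assumes "a + 2 < m"
  shows "a_step m a (a+1) 1 = node a (a+2) 0" "a_step m (a+1) a 1 = node (a+1) (a+2) 0"
    "a_step m (a+1) (a+2) 0 = node (a+1) a 1" "a_step m (a+2) (a+1) 0 = node (a+2) a 1"
    "a_step m (a+2) a 1 = node (a+2) (a+1) 0" "a_step m a (a+2) 0 = node a (a+1) 1"
  using assms unfolding a_step_def rot_def rot_inv_def by auto

text \<open>X is f_step when a + b is odd (a face of the dual) and z_step when a + b is even (a face
  of the phial).\<close>

lemma comp_quad_face:
  assumes adj: "adj_rel en S = step_rel m X \<union> step_rel m (a_step m)"
    and X: "\<And>u w s. X u w s = node w u (if even (u + w + a + b) then s else 1 - s)"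
    and ab: "a + 1 < b" "b + 1 < m"
  shows "comp en S (node a b 1) = quad_face a b"
proof (rule comp_eq_step_closed[OF adj])
  note A = a_step_quad_face[OF ab]
  have X8: "X a b 1 = node b a 1" "X b (a+1) 0 = node (a+1) b 1"
    "X (a+1) (b+1) 0 = node (b+1) (a+1) 0" "X (b+1) a 1 = node a (b+1) 0"
    "X b a 1 = node a b 1" "X (a+1) b 1 = node b (a+1) 0"
    "X (b+1) (a+1) 0 = node (a+1) (b+1) 0" "X a (b+1) 0 = node (b+1) a 1"
    unfolding X by (cases "even a"; cases "even b"; simp)+
  show "node a b 1 \<in> quad_face a b" unfolding quad_face_def by simp
  show "X u w s \<in> quad_face a b \<and> a_step m u w s \<in> quad_face a b"
    if "dart m u w s" "node u w s \<in> quad_face a b" for u w s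
  proof
    show "X u w s \<in> quad_face a b"
      using that(2) unfolding quad_face_def insert_iff node_eq_iff empty_iff
      by (elim disjE conjE) (use X8 in simp_all)
    show "a_step m u w s \<in> quad_face a b" using that(2) A unfolding quad_face_def by auto
  qed
  let ?C = "comp en S (node a b 1)"
  note step = step_in_comp[OF adj]
  have d: "dart m a b 1" "dart m b a 1" "dart m b (a+1) 0" "dart m (a+1) b 1" "dart m (a+1) (b+1) 0"
    "dart m (b+1) (a+1) 0" "dart m (b+1) a 1" using ab by (auto simp: dart_def)
  have 1: "node b a 1 \<in> ?C" using step(1)[OF d(1) comp_self] using X8 by simp
  have 2: "node b (a+1) 0 \<in> ?C" using step(2)[OF d(2) 1] A by simp
  have 3: "node (a+1) b 1 \<in> ?C" using step(1)[OF d(3) 2] using X8 by simp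
  have 4: "node (a+1) (b+1) 0 \<in> ?C" using step(2)[OF d(4) 3] A by simp
  have 5: "node (b+1) (a+1) 0 \<in> ?C" using step(1)[OF d(5) 4] using X8 by simp
  have 6: "node (b+1) a 1 \<in> ?C" using step(2)[OF d(6) 5] A by simp
  have 7: "node a (b+1) 0 \<in> ?C" using step(1)[OF d(7) 6] using X8 by simp
  show "quad_face a b \<subseteq> ?C" unfolding quad_face_def using 1 2 3 4 5 6 7 by simp
qed

lemma comp_tri_face:
  assumes m: "2 \<le> m" and a: "a + 2 < m"
  shows "comp (kends m) (f_edges m \<union> a_edges m) (node a (a+1) 1) = tri_face a"
proof (rule comp_eq_step_closed[OF adj_fa_edges[OF m]])
  note A = a_step_tri_face[OF a]
  show "node a (a+1) 1 \<in> tri_face a" unfolding tri_face_def by simp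
  show "f_step u w s \<in> tri_face a \<and> a_step m u w s \<in> tri_face a"
    if "dart m u w s" "node u w s \<in> tri_face a" for u w s
  proof
    show "f_step u w s \<in> tri_face a"
      using that(2) unfolding tri_face_def insert_iff node_eq_iff empty_iff
      by (elim disjE conjE) (simp_all add: f_step_def f_side_def)
    show "a_step m u w s \<in> tri_face a" using that(2) A unfolding tri_face_def by auto
  qed
  let ?C = "comp (kends m) (f_edges m \<union> a_edges m) (node a (a+1) 1)"
  note step = step_in_comp[OF adj_fa_edges[OF m]]
  have d: "dart m a (a+1) 1" "dart m (a+1) a 1" "dart m (a+1) (a+2) 0" "dart m (a+2) (a+1) 0"
    "dart m (a+2) a 1" using a by (auto simp: dart_def)
  have 1: "node (a+1) a 1 \<in> ?C"
    using step(1)[OF d(1) comp_self] by (simp add: f_step_def f_side_def)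
  have 2: "node (a+1) (a+2) 0 \<in> ?C" using step(2)[OF d(2) 1] A by simp
  have 3: "node (a+2) (a+1) 0 \<in> ?C" using step(1)[OF d(3) 2] by (simp add: f_step_def f_side_def)
  have 4: "node (a+2) a 1 \<in> ?C" using step(2)[OF d(4) 3] A by simp
  have 5: "node a (a+2) 0 \<in> ?C" using step(1)[OF d(5) 4] by (simp add: f_step_def f_side_def)
  show "tri_face a \<subseteq> ?C" unfolding tri_face_def using 1 2 3 4 5 by simp
qed

lemma coboundary_face:
  assumes G: "gedges G = squares (kmap m)"
    and ginc: "\<And>u w. u < m \<Longrightarrow> w < m \<Longrightarrow> u \<noteq> w \<Longrightarrow>
      ginc G (sq u w) K = of_bool (node u w 0 \<in> K) + of_bool (node u w 1 \<in> K)"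
  shows "coboundary G {K} = {sq u w | u w. u < w \<and> w < m \<and> (node u w 0 \<in> K) \<noteq> (node u w 1 \<in> K)}"
proof (intro set_eqI iffI)
  fix q assume "q \<in> coboundary G {K}"
  then obtain u w where "q = sq u w" "u < w" "w < m" "odd (ginc G q K)"
    unfolding coboundary_singleton G squares_kmap by auto
  then show "q \<in> {sq u w | u w. u < w \<and> w < m \<and> (node u w 0 \<in> K) \<noteq> (node u w 1 \<in> K)}"
    using ginc[of u w] odd_of_bool_add_iff by auto
next
  fix q assume "q \<in> {sq u w | u w. u < w \<and> w < m \<and> (node u w 0 \<in> K) \<noteq> (node u w 1 \<in> K)}"
  then obtain u w where "q = sq u w" "u < w" "w < m" "(node u w 0 \<in> K) \<noteq> (node u w 1 \<in> K)"
    by blast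
  then show "q \<in> coboundary G {K}"
    unfolding coboundary_singleton G squares_kmap using ginc[of u w] odd_of_bool_add_iff by auto
qed

definition sqs :: "(nat \<times> nat) set \<Rightarrow> nat set set" where
  "sqs P = (\<lambda>(u, w). sq u w) ` P"

lemma sq_Collect_eq_sqs:
  assumes "\<And>u w. u < w \<Longrightarrow> w < m \<Longrightarrow> R u w \<longleftrightarrow> (u, w) \<in> P"
    and "\<And>u w. (u, w) \<in> P \<Longrightarrow> u < w \<and> w < m"
  shows "{sq u w | u w. u < w \<and> w < m \<and> R u w} = sqs P"
proof (intro set_eqI iffI)
  fix q assume "q \<in> {sq u w | u w. u < w \<and> w < m \<and> R u w}"
  then obtain u w where "q = sq u w" "u < w" "w < m" "R u w" by blast
  then show "q \<in> sqs P" unfolding sqs_def using assms(1) by force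
next
  fix q assume "q \<in> sqs P"
  then obtain u w where "q = sq u w" "(u, w) \<in> P" unfolding sqs_def by auto
  then show "q \<in> {sq u w | u w. u < w \<and> w < m \<and> R u w}" using assms by blast
qed

lemma crossing_quad_face:
  assumes ab: "a + 1 < b" "b + 1 < m"
  shows "{sq u w | u w. u < w \<and> w < m \<and> (node u w 0 \<in> quad_face a b) \<noteq> (node u w 1 \<in> quad_face a b)}
      = sqs {(a, b), (a+1, b), (a+1, b+1), (a, b+1)}"
proof (rule sq_Collect_eq_sqs)
  fix u w :: nat assume "u < w"
  then have "node u w 1 \<in> quad_face a b \<longleftrightarrow> u = a \<and> w = b \<or> u = a + 1 \<and> w = b"
    "node u w 0 \<in> quad_face a b \<longleftrightarrow> u = a + 1 \<and> w = b + 1 \<or> u = a \<and> w = b + 1"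
    using ab unfolding quad_face_def by auto
  then show "(node u w 0 \<in> quad_face a b) \<noteq> (node u w 1 \<in> quad_face a b)
      \<longleftrightarrow> (u, w) \<in> {(a, b), (a+1, b), (a+1, b+1), (a, b+1)}"
    by auto
qed (use ab in auto)

lemma crossing_tri_face:
  assumes a: "a + 2 < m"
  shows "{sq u w | u w. u < w \<and> w < m \<and> (node u w 0 \<in> tri_face a) \<noteq> (node u w 1 \<in> tri_face a)}
      = sqs {(a, a+1), (a+1, a+2), (a, a+2)}"
proof (rule sq_Collect_eq_sqs)
  fix u w :: nat assume "u < w"
  then have "node u w 1 \<in> tri_face a \<longleftrightarrow> u = a \<and> w = a + 1"
    "node u w 0 \<in> tri_face a \<longleftrightarrow> u = a + 1 \<and> w = a + 2 \<or> u = a \<and> w = a + 2"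
    unfolding tri_face_def by auto
  then show "(node u w 0 \<in> tri_face a) \<noteq> (node u w 1 \<in> tri_face a)
      \<longleftrightarrow> (u, w) \<in> {(a, a+1), (a+1, a+2), (a, a+2)}"
    by auto
qed (use a in auto)

lemma coboundary_GD_in_FZ:
  assumes m: "2 \<le> m" and K: "K \<in> gverts (GD m)"
  shows "{sq u w | u w. u < w \<and> w < m \<and> (node u w 0 \<in> K) \<noteq> (node u w 1 \<in> K)} \<in> FZ m"
proof -
  have "coboundary (GD m) {K} \<in> FZ m"
    by (rule subsetD[OF cob_space_subset_space_sum(1) coboundary_singleton_in_cob_space[OF K]])
  then show ?thesis using coboundary_face[OF GD_simps(1) ginc_GD[OF m _ _ _ K]] by simp
qed

lemma coboundary_GP_in_FZ:
  assumes m: "2 \<le> m" and K: "K \<in> gverts (GP m)"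
  shows "{sq u w | u w. u < w \<and> w < m \<and> (node u w 0 \<in> K) \<noteq> (node u w 1 \<in> K)} \<in> FZ m"
proof -
  have "coboundary (GP m) {K} \<in> FZ m"
    by (rule subsetD[OF cob_space_subset_space_sum(2) coboundary_singleton_in_cob_space[OF K]])
  then show ?thesis using coboundary_face[OF GP_simps(1) ginc_GP[OF m _ _ _ K]] by simp
qed

lemma quad_in_FZ:
  assumes m: "2 \<le> m" and ab: "a + 1 < b" "b + 1 < m"
  shows "sqs {(a, b), (a+1, b), (a+1, b+1), (a, b+1)} \<in> FZ m"
proof (cases "odd (a + b)")
  case True
  have "comp (kends m) (f_edges m \<union> a_edges m) (node a b 1) = quad_face a b"
  proof (rule comp_quad_face[OF adj_fa_edges[OF m] _ ab])
    fix u w s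
    have "odd (u + w) \<longleftrightarrow> even (u + w + a + b)" using True by presburger
    then show "f_step u w s = node w u (if even (u + w + a + b) then s else 1 - s)"
      by (simp add: f_step_def f_side_def)
  qed
  moreover have "node a b 1 \<in> knodes m" using ab by (simp add: dart_def)
  ultimately have "quad_face a b \<in> gverts (GD m)" unfolding GD_simps by (metis image_eqI)
  from coboundary_GD_in_FZ[OF m this] show ?thesis unfolding crossing_quad_face[OF ab] .
next
  case False
  have "comp (qends (kmap m)) (Inr ` zdiag (kmap m) \<union> Inl ` a_edges m) (node a b 1) = quad_face a b"
  proof (rule comp_quad_face[OF adj_za_edges[OF m] _ ab])
    fix u w s
    have "even (u + w) \<longleftrightarrow> even (u + w + a + b)" using False by presburger
    then show "z_step u w s = node w u (if even (u + w + a + b) then s else 1 - s)"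
      by (simp add: z_step_def z_side_def)
  qed
  moreover have "node a b 1 \<in> knodes m" using ab by (simp add: dart_def)
  ultimately have "quad_face a b \<in> gverts (GP m)" unfolding GP_simps by (metis imageI)
  from coboundary_GP_in_FZ[OF m this] show ?thesis unfolding crossing_quad_face[OF ab] .
qed

lemma tri_in_FZ:
  assumes m: "2 \<le> m" and a: "a + 2 < m"
  shows "sqs {(a, a+1), (a+1, a+2), (a, a+2)} \<in> FZ m"
proof -
  have "node a (a+1) 1 \<in> knodes m" using a by (simp add: dart_def)
  then have "tri_face a \<in> gverts (GD m)"
    unfolding GD_simps comp_tri_face[OF m a, symmetric] by (rule imageI)
  from coboundary_GD_in_FZ[OF m this] show ?thesis unfolding crossing_tri_face[OF a] .
qed

definition path_pairs :: "nat \<Rightarrow> nat \<Rightarrow> (nat \<times> nat) set" where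
  "path_pairs a b = {(k, k + 1) | k. a \<le> k \<and> k < b}"

definition cycle_pairs :: "nat \<Rightarrow> nat \<Rightarrow> (nat \<times> nat) set" where
  "cycle_pairs a b = symdiff {(a, b)} (path_pairs a b)"

lemma cycle_pairs_Suc: "cycle_pairs a (a + 1) = {}"
  unfolding cycle_pairs_def path_pairs_def symdiff_def by auto

lemma cycle_pairs_triangle: "cycle_pairs a (a + 2) = {(a, a+1), (a+1, a+2), (a, a+2)}"
  unfolding cycle_pairs_def path_pairs_def symdiff_def by auto

lemma cycle_pairs_step:
  assumes "a + 1 < b"
  shows "cycle_pairs a (b + 1) = symdiff (symdiff (symdiff {(a, b), (a+1, b), (a+1, b+1), (a, b+1)}
           (cycle_pairs a b)) (cycle_pairs (a+1) b)) (cycle_pairs (a+1) (b+1))"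
proof -
  have "x \<in> cycle_pairs a (b + 1) \<longleftrightarrow>
    x \<in> symdiff (symdiff (symdiff {(a, b), (a+1, b), (a+1, b+1), (a, b+1)}
           (cycle_pairs a b)) (cycle_pairs (a+1) b)) (cycle_pairs (a+1) (b+1))" for x
  proof (cases x)
    case (Pair p q)
    show ?thesis
      unfolding Pair cycle_pairs_def path_pairs_def symdiff_iff
      using assms by (cases "q = p + 1"; cases "p = a"; cases "p = a + 1") auto
  qed
  then show ?thesis by blast
qed

lemma cycle_pairs_ordered: "a < b \<Longrightarrow> cycle_pairs a b \<subseteq> {(u, w). u < w}"
  unfolding cycle_pairs_def path_pairs_def using symdiff_subset_Un by fastforce

lemma sqs_symdiff:
  assumes "P \<subseteq> {(u, w). u < w}" "Q \<subseteq> {(u, w). u < w}"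
  shows "sqs (symdiff P Q) = symdiff (sqs P) (sqs Q)"
proof -
  have inj: "inj_on (\<lambda>(u, w). sq u w) {(u, w). u < w}"
    by (auto simp: inj_on_def sq_eq_iff)
  have "sqs (P - Q) = sqs P - sqs Q" "sqs (Q - P) = sqs Q - sqs P"
    unfolding sqs_def using assms by (auto intro!: inj_on_image_set_diff[OF inj])
  then show ?thesis unfolding symdiff_def by (simp add: sqs_def image_Un)
qed

lemma FZ_symdiff: "A \<in> FZ m \<Longrightarrow> B \<in> FZ m \<Longrightarrow> symdiff A B \<in> FZ m"
  by (rule space_sum_symdiff) (simp_all add: GD_simps GP_simps finite_knodes)

lemma cycle_in_FZ:
  assumes m: "2 \<le> m"
  shows "a < b \<Longrightarrow> b < m \<Longrightarrow> sqs (cycle_pairs a b) \<in> FZ m"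
proof (induction "b - a" arbitrary: a b rule: less_induct)
  case less
  have "b = a + 1 \<or> b = a + 2 \<or> b = (b - 1) + 1 \<and> a + 1 < b - 1" using less.prems by arith
  then consider "b = a + 1" | "b = a + 2" | b' where "b = b' + 1" "a + 1 < b'" by blast
  then show ?case
  proof cases
    case 1
    then show ?thesis
      using cycle_pairs_Suc empty_in_space_sum by (simp add: sqs_def)
  next
    case 2
    then show ?thesis using tri_in_FZ[OF m] cycle_pairs_triangle less.prems by simp
  next
    case 3
    let ?Q = "{(a, b'), (a+1, b'), (a+1, b'+1), (a, b'+1)}"
    let ?C1 = "cycle_pairs a b'" and ?C2 = "cycle_pairs (a+1) b'"
      and ?C3 = "cycle_pairs (a+1) (b'+1)"
    have ord: "?Q \<subseteq> {(u, w). u < w}" "?C1 \<subseteq> {(u, w). u < w}" "?C2 \<subseteq> {(u, w). u < w}"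
      "?C3 \<subseteq> {(u, w). u < w}"
      using 3 cycle_pairs_ordered by auto
    have ord': "symdiff ?Q ?C1 \<subseteq> {(u, w). u < w}" "symdiff (symdiff ?Q ?C1) ?C2 \<subseteq> {(u, w). u < w}"
      using ord by (simp_all add: symdiff_subset)
    have "sqs (cycle_pairs a b)
        = symdiff (symdiff (symdiff (sqs ?Q) (sqs ?C1)) (sqs ?C2)) (sqs ?C3)"
      unfolding 3(1) cycle_pairs_step[OF 3(2)] sqs_symdiff[OF ord'(2) ord(4)]
        sqs_symdiff[OF ord'(1) ord(3)] sqs_symdiff[OF ord(1,2)] ..
    moreover have "sqs ?Q \<in> FZ m" using quad_in_FZ[OF m 3(2)] 3 less.prems by simp
    moreover have "sqs ?C1 \<in> FZ m" "sqs ?C2 \<in> FZ m" "sqs ?C3 \<in> FZ m"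
      by (rule less.hyps; use 3 less.prems in simp)+
    ultimately show ?thesis by (simp add: FZ_symdiff)
  qed
qed

definition chords :: "nat \<Rightarrow> nat set set" where
  "chords m = sqs {(a, b). a + 2 \<le> b \<and> b < m}"

lemma sq_in_chords: "a + 2 \<le> b \<Longrightarrow> b < m \<Longrightarrow> sq a b \<in> chords m"
  unfolding chords_def sqs_def by (rule image_eqI[of _ _ "(a, b)"]) simp_all

lemma V_orth_disjoint_chords_eq_empty:
  assumes m: "2 \<le> m" and S: "S \<in> V_orth m" and no_chords: "S \<inter> chords m = {}"
  shows "S = {}"
proof (rule ccontr)
  assume "S \<noteq> {}"
  have path: "\<exists>k. k + 1 < m \<and> q = sq k (k + 1)" if q: "q \<in> S" for q
  proof -
    obtain a b where "q = sq a b" "a < b" "b < m"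
      using q S unfolding orth_def squares_kmap by auto
    moreover have "q \<notin> chords m" using q no_chords by blast
    ultimately have "b = a + 1" using sq_in_chords[of a b m] by fastforce
    with \<open>q = sq a b\<close> \<open>b < m\<close> show ?thesis by blast
  qed
  then obtain k0 where "k0 + 1 < m \<and> sq k0 (k0 + 1) \<in> S" using \<open>S \<noteq> {}\<close> by blast
  define k where "k = (LEAST k. k + 1 < m \<and> sq k (k + 1) \<in> S)"
  have k: "k + 1 < m" "sq k (k + 1) \<in> S"
    using LeastI[of "\<lambda>k. k + 1 < m \<and> sq k (k + 1) \<in> S", OF \<open>k0 + 1 < m \<and> _\<close>] unfolding k_def by auto
  have k_least: "k \<le> j" if "j + 1 < m" "sq j (j + 1) \<in> S" for j
    unfolding k_def using that by (intro Least_le) simp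
  have "S \<inter> coboundary (GM m) {star m k} = {sq k (k + 1)}"
  proof (intro set_eqI iffI)
    fix q assume q: "q \<in> S \<inter> coboundary (GM m) {star m k}"
    then obtain j where "j + 1 < m" "q = sq j (j + 1)" using path by blast
    moreover obtain w where "q = sq k w" using q coboundary_star[of k m] k(1) by auto
    ultimately show "q \<in> {sq k (k + 1)}" using k_least[of j] q by (auto simp: sq_eq_iff sq_commute)
  qed (use k coboundary_star[of k m] in auto)
  moreover have "coboundary (GM m) {star m k} \<in> cob_space (GM m)"
    using k(1) gverts_GM[OF m] by (intro coboundary_singleton_in_cob_space) simp
  ultimately show False using S unfolding orth_def by fastforce
qed

lemma cycle_Int_chords:
  assumes "a + 2 \<le> b" "b < m"
  shows "sqs (cycle_pairs a b) \<inter> chords m = {sq a b}"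
proof -
  have "cycle_pairs a b = insert (a, b) (path_pairs a b)"
    using assms unfolding cycle_pairs_def path_pairs_def symdiff_def by auto
  moreover have "sqs (path_pairs a b) \<inter> chords m = {}"
    unfolding sqs_def path_pairs_def chords_def by (auto simp: sq_eq_iff)
  moreover have "sq a b \<in> chords m" using assms by (rule sq_in_chords)
  ultimately show ?thesis unfolding sqs_def by auto
qed

lemma finite_chords: "finite (chords m)"
proof -
  have "{(a, b). a + 2 \<le> b \<and> b < m} \<subseteq> {..<m} \<times> {..<m}" by auto
  then show ?thesis unfolding chords_def sqs_def using finite_subset by blast
qed

lemma V_orth_subset_FZ:
  assumes m: "2 \<le> m"
  shows "S \<in> V_orth m \<Longrightarrow> S \<in> FZ m"
proof (induction "card (S \<inter> chords m)" arbitrary: S rule: less_induct)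
  case less
  show ?case
  proof (cases "S \<inter> chords m = {}")
    case True
    then show ?thesis using V_orth_disjoint_chords_eq_empty[OF m less.prems] empty_in_space_sum
      by simp
  next
    case False
    then obtain a b where ab: "sq a b \<in> S" "a + 2 \<le> b" "b < m"
      unfolding chords_def sqs_def by auto
    let ?C = "sqs (cycle_pairs a b)"
    have C: "?C \<in> FZ m" using cycle_in_FZ[OF m] ab by simp
    have fin: "\<And>T. T \<in> cob_space (GM m) \<Longrightarrow> finite T"
      using finite_cob_space_mem finite_squares_kmap gedges_GM by metis
    have "?C \<in> V_orth m" by (rule subsetD[OF FZ_subset_V_orth[OF m] C])
    with fin less.prems have "symdiff S ?C \<in> V_orth m" by (rule orth_symdiff)
    moreover have "card (symdiff S ?C \<inter> chords m) < card (S \<inter> chords m)"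
    proof -
      have key: "x \<in> ?C \<and> x \<in> chords m \<longleftrightarrow> x = sq a b" for x
        using cycle_Int_chords[OF ab(2,3)] by (metis Int_iff singleton_iff)
      have "symdiff S ?C \<inter> chords m = S \<inter> chords m - {sq a b}"
      proof (intro set_eqI)
        fix x
        show "x \<in> symdiff S ?C \<inter> chords m \<longleftrightarrow> x \<in> S \<inter> chords m - {sq a b}"
          using key[of x] ab(1) by (cases "x = sq a b") (auto simp: symdiff_iff)
      qed
      moreover have "sq a b \<in> S \<inter> chords m" using ab(1) sq_in_chords[OF ab(2,3)] by (rule IntI)
      moreover have "finite (S \<inter> chords m)" by (simp add: finite_chords)
      ultimately show ?thesis by (metis card_Diff1_less)
    qed
    ultimately have "symdiff S ?C \<in> FZ m" by (meson less.hyps)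
    then have "symdiff (symdiff S ?C) ?C \<in> FZ m" using C by (rule FZ_symdiff)
    then show ?thesis by (simp only: symdiff_symdiff_cancel)
  qed
qed

theorem rich_kmap:
  assumes "2 \<le> m"
  shows "rich (kmap m)"
  unfolding rich_def using is_map_kmap FZ_subset_V_orth V_orth_subset_FZ assms by blast

theorem theorem2p11:
  fixes n :: nat
  assumes "n \<ge> 1"
  shows "map_rich (complete_graph (2 * n))"
proof -
  have "2 \<le> 2 * n" using assms by simp
  then show ?thesis
    unfolding map_rich_def using rich_kmap complete_graph_iso_GM by blast
qed

end
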